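(* Let $n\ge3$, $\ell\in\{1,\dots,n-2\}$, and let $K^\pm_\ell$ be as defined below. Then $$(K^\pm_\ell)^2=\big(\Gamma_{[\ell+2]}-\Gamma_{[\ell+1]}\pm\Gamma_{\{\ell+2\}}\pm\tfrac12\big)\big(\Gamma_{[\ell+2]}+\Gamma_{[\ell+1]}\pm\Gamma_{\{\ell+2\}}\mp\tfrac12\big)\big(\Gamma_{[\ell]}-\Gamma_{[\ell+1]}\pm\Gamma_{\{\ell+1\}}\pm\tfrac12\big)\big(\Gamma_{[\ell]}+\Gamma_{[\ell+1]}\pm\Gamma_{\{\ell+1\}}\mp\tfrac12\big),$$ with the upper signs taken throughout for $K^+_\ell$ and the lower signs throughout for $K^-_\ell$.
   Context: Fix $n\ge1$ and real parameters $\mu_1,\dots,\mu_n>0$; write $[\ell]=\{1,\dots,\ell\}$. For $i\in[n]$, $r_i$ is the reflection $(r_if)(x)=f(x_1,\dots,-x_i,\dots,x_n)$ and $T_i=\partial_{x_i}+\frac{\mu_i}{x_i}(1-r_i)$. $\mathcal{C}\ell_n$ is generated by $e_1,\dots,e_n$ with $e_ie_j+e_je_i=-2\delta_{ij}$, $V$ is a fixed left $\mathcal{C}\ell_n$-module, and operators act on $\mathcal{P}(\mathbb{R}^n)\otimes V$ with $x_i,T_i,r_i$ acting on the polynomial factor and $e_i$ on $V$. For $A\subseteq[n]$: $\underline{D}_A=\sum_{i\in A}e_iT_i$, $\underline{x}_A=\sum_{i\in A}e_ix_i$, $\underline{S}_A=\frac12([\underline{x}_A,\underline{D}_A]-1)$,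 $\Gamma_A=\underline{S}_A\prod_{i\in A}r_i$ (empty sums $0$, empty products $1$); note $\Gamma_{\{k\}}=\mu_k$. For $\ell\in\{1,\dots,n-2\}$: $K^\pm_\ell=(\Gamma_{\{\ell+1,\ell+2\}}\pm\Gamma_{[\ell+2]\setminus\{\ell+1\}})(\Gamma_{[\ell+1]}\mp\frac12)-(\Gamma_{\{\ell+2\}}\pm\Gamma_{[\ell+2]})(\Gamma_{[\ell]}\pm\Gamma_{\{\ell+1\}})$. *)

theory Defs
  imports "HOL-Analysis.Analysis"
begin

text \<open>Points of R^n are functions nat => real; only coordinates 1..n matter.
  Elements of P(R^n) (x) V are V-valued polynomial functions.\<close>

type_synonym 'v fn = "(nat \<Rightarrow> real) \<Rightarrow> 'v"
type_synonym 'v oper = "'v fn \<Rightarrow> 'v fn"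

inductive_set polyfun :: "nat \<Rightarrow> (real fn) set" for n :: nat where
  pconst: "(\<lambda>x. c) \<in> polyfun n"
| pvar: "i \<in> {1..n} \<Longrightarrow> (\<lambda>x. x i) \<in> polyfun n"
| padd: "p \<in> polyfun n \<Longrightarrow> q \<in> polyfun n \<Longrightarrow> (\<lambda>x. p x + q x) \<in> polyfun n"
| pmul: "p \<in> polyfun n \<Longrightarrow> q \<in> polyfun n \<Longrightarrow> (\<lambda>x. p x * q x) \<in> polyfun n"

text \<open>P(R^n) tensor V: finite sums of p(x) v.\<close>
inductive_set polyV :: "nat \<Rightarrow> ('v::real_vector) fn set" for n :: nat where
  vzero: "(\<lambda>x. 0) \<in> polyV n"
| vsimple: "p \<in> polyfun n \<Longrightarrow> (\<lambda>x. p x *\<^sub>R v) \<in> polyV n"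
| vadd: "f \<in> polyV n \<Longrightarrow> g \<in> polyV n \<Longrightarrow> (\<lambda>x. f x + g x) \<in> polyV n"

definition clifford_module :: "nat \<Rightarrow> (nat \<Rightarrow> 'v::real_vector \<Rightarrow> 'v) \<Rightarrow> bool" where
  "clifford_module n e \<longleftrightarrow> (\<forall>i\<in>{1..n}. linear (e i)) \<and>
     (\<forall>i\<in>{1..n}. \<forall>j\<in>{1..n}. \<forall>v. e i (e j v) + e j (e i v) = (if i = j then -2 else 0) *\<^sub>R v)"

definition reflset :: "nat set \<Rightarrow> ('v::real_vector) oper" where
  "reflset A f = (\<lambda>x. f (\<lambda>j. if j \<in> A then - x j else x j))"

definition pd :: "nat \<Rightarrow> ('v::real_normed_vector) oper" where
  "pd i f = (\<lambda>x. vector_derivative (\<lambda>t. f (x(i := t))) (at (x i)))"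

text \<open>Dunkl operator T_i = d_i + mu_i/x_i (1 - r_i); on the hyperplane x_i = 0 the
  divided difference (f(x) - f(r_i x))/x_i is given its (polynomial) value 2 d_i f(x).\<close>
definition dunkl :: "(nat \<Rightarrow> real) \<Rightarrow> nat \<Rightarrow> ('v::real_normed_vector) oper" where
  "dunkl mu i f = (\<lambda>x. pd i f x + mu i *\<^sub>R
      (if x i = 0 then 2 *\<^sub>R pd i f x else (1 / x i) *\<^sub>R (f x - f (x(i := - x i)))))"

definition Dirac :: "(nat \<Rightarrow> real) \<Rightarrow> (nat \<Rightarrow> 'v \<Rightarrow> 'v) \<Rightarrow> nat set \<Rightarrow> ('v::real_normed_vector) oper" where
  "Dirac mu e A f = (\<lambda>x. \<Sum>i\<in>A. e i (dunkl mu i f x))"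

definition Xop :: "(nat \<Rightarrow> 'v \<Rightarrow> 'v) \<Rightarrow> nat set \<Rightarrow> ('v::real_normed_vector) oper" where
  "Xop e A f = (\<lambda>x. \<Sum>i\<in>A. x i *\<^sub>R e i (f x))"

definition Sop :: "(nat \<Rightarrow> real) \<Rightarrow> (nat \<Rightarrow> 'v \<Rightarrow> 'v) \<Rightarrow> nat set \<Rightarrow> ('v::real_normed_vector) oper" where
  "Sop mu e A f = (\<lambda>x. (1/2) *\<^sub>R (Xop e A (Dirac mu e A f) x - Dirac mu e A (Xop e A f) x - f x))"

definition Gam :: "(nat \<Rightarrow> real) \<Rightarrow> (nat \<Rightarrow> 'v \<Rightarrow> 'v) \<Rightarrow> nat set \<Rightarrow> ('v::real_normed_vector) oper" where
  "Gam mu e A f = Sop mu e A (reflset A f)"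

definition op_plus :: "('v::real_vector) oper \<Rightarrow> 'v oper \<Rightarrow> 'v oper" where
  "op_plus F G = (\<lambda>f x. F f x + G f x)"

definition op_minus :: "('v::real_vector) oper \<Rightarrow> 'v oper \<Rightarrow> 'v oper" where
  "op_minus F G = (\<lambda>f x. F f x - G f x)"

definition op_smul :: "real \<Rightarrow> ('v::real_vector) oper \<Rightarrow> 'v oper" where
  "op_smul c F = (\<lambda>f x. c *\<^sub>R F f x)"

definition op_const :: "real \<Rightarrow> ('v::real_vector) oper" where
  "op_const c = (\<lambda>f x. c *\<^sub>R f x)"

text \<open>K^s_l for s = 1 (K^+) and s = -1 (K^-); composition of operators is \<circ>.\<close>
definition Kop :: "(nat \<Rightarrow> real) \<Rightarrow> (nat \<Rightarrow> 'v \<Rightarrow> 'v) \<Rightarrow> real \<Rightarrow> nat \<Rightarrow> ('v::real_normed_vector) oper" where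
  "Kop mu e s l = op_minus
     (op_plus (Gam mu e {l+1, l+2}) (op_smul s (Gam mu e ({1..l+2} - {l+1})))
        \<circ> op_plus (Gam mu e {1..l+1}) (op_const (- s / 2)))
     (op_plus (Gam mu e {l+2}) (op_smul s (Gam mu e {1..l+2}))
        \<circ> op_plus (Gam mu e {1..l}) (op_smul s (Gam mu e {l+1})))"

end

theory Submission
  imports Defs
begin

text \<open>
  For an index set \<open>A\<close> write \<open>X\<^sub>A\<close>, \<open>D\<^sub>A\<close> for the operators \<open>x\<^sub>A\<close>, \<open>D\<^sub>A\<close> of the statement
  and \<open>R\<^sub>A\<close> for the product of the reflections \<open>r\<^sub>i\<close>, \<open>i \<in> A\<close>. For pairwise disjoint
  blocks these satisfy a handful of relations: inside a block \<open>R\<^sub>A\<close> is an involution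
  anticommuting with \<open>X\<^sub>A\<close> and \<open>D\<^sub>A\<close>, and \<open>\<Gamma>\<^sub>A\<close> commutes with both; across blocks the
  \<open>X\<close>'s and \<open>D\<close>'s anticommute and all other pairs commute. These relations alone imply the
  identity. Number the blocks \<open>[l]\<close>, \<open>{l+1}\<close>, \<open>{l+2}\<close> as 1, 2, 3 and put
  \<open>Y = \<Gamma>\<^sub>2\<^sub>3 + \<Gamma>\<^sub>1\<^sub>3\<close>, \<open>P = \<Gamma>\<^sub>1\<^sub>2 - 1/2\<close>, \<open>u = \<Gamma>\<^sub>3 + \<Gamma>\<^sub>1\<^sub>2\<^sub>3\<close>, \<open>v = \<Gamma>\<^sub>1 + \<Gamma>\<^sub>2\<close>,
  so that \<open>K\<^sup>+ = YP - uv\<close>. The relations give \<open>PY + YP = 2uv\<close>, \<open>uvY = Yuv\<close>, pairwise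
  commutation of \<open>u\<close>, \<open>v\<close>, \<open>P\<close>, and \<open>Y\<^sup>2 = u\<^sup>2 + v\<^sup>2 - P\<^sup>2\<close>; hence
  \<open>(K\<^sup>+)\<^sup>2 = u\<^sup>2v\<^sup>2 - Y\<^sup>2P\<^sup>2 = (u\<^sup>2 - P\<^sup>2)(v\<^sup>2 - P\<^sup>2)\<close>, the claimed product of four factors.
  Replacing \<open>R\<close> by \<open>-R\<close> on the first block preserves the relations, negates exactly the
  \<open>\<Gamma>\<close>'s of the sets containing that block, and turns \<open>K\<^sup>+\<close> into \<open>-K\<^sup>-\<close>; this gives the
  case \<open>K\<^sup>-\<close>.
\<close>

section \<open>Noncommutative ring identities\<close>

lemma mult_left_rewrite:
  fixes a b c z :: "'a::semigroup_mult"
  shows "a * b = c \<Longrightarrow> a * (b * z) = c * z"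
  by (simp add: mult.assoc[symmetric])

lemma sum_anticommute:
  fixes f g :: "'b \<Rightarrow> 'a::ring"
  assumes "\<And>i j. i \<in> A \<Longrightarrow> j \<in> B \<Longrightarrow> f i * g j = - (g j * f i)"
  shows "sum f A * sum g B = - (sum g B * sum f A)"
proof -
  have "sum f A * sum g B = (\<Sum>i\<in>A. \<Sum>j\<in>B. f i * g j)" by (rule sum_product)
  also have "\<dots> = (\<Sum>i\<in>A. \<Sum>j\<in>B. - (g j * f i))" using assms by simp
  also have "\<dots> = - (\<Sum>j\<in>B. \<Sum>i\<in>A. g j * f i)" by (simp add: sum_negf sum.swap[of _ A])
  also have "\<dots> = - (sum g B * sum f A)" by (simp add: sum_product)
  finally show ?thesis .
qed

lemma commute_sum:
  fixes g :: "'b \<Rightarrow> 'a::ring"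
  assumes "\<And>j. j \<in> B \<Longrightarrow> a * g j = g j * a"
  shows "a * sum g B = sum g B * a"
  using assms by (simp add: sum_distrib_left sum_distrib_right)

lemma anticommute_sum:
  fixes g :: "'b \<Rightarrow> 'a::ring"
  assumes "\<And>j. j \<in> B \<Longrightarrow> a * g j = - (g j * a)"
  shows "a * sum g B = - (sum g B * a)"
  using assms by (simp add: sum_distrib_left sum_distrib_right sum_negf)

lemma commute_add_add:
  fixes a b c d :: "'a::ring"
  shows "a*c = c*a \<Longrightarrow> a*d = d*a \<Longrightarrow> b*c = c*b \<Longrightarrow> b*d = d*b \<Longrightarrow> (a+b)*(c+d) = (c+d)*(a+b)"
  by (simp add: algebra_simps)

lemma square_eq_product_negate:
  fixes K a b c d :: "'a::ring"
  assumes "K * K = a * b * c * d"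
    and "- K = K'" "- a = a'" "- b = b'" "- c = c'" "- d = d'"
  shows "K' * K' = a' * b' * c' * d'"
  using assms by auto

lemma square_diff_of_anticommutator:
  fixes P Y C :: "'a::{ring,monoid_mult}"
  assumes anti: "P * Y + Y * P = C + C" and CY: "C * Y = Y * C" and CP: "C * P = P * C"
  shows "(Y * P - C) * (Y * P - C) = C * C - Y * Y * (P * P)"
proof -
  have "Y * P * (Y * P) = Y * (P * Y) * P" by (simp add: mult.assoc)
  also have "\<dots> = Y * C * P + Y * C * P - Y * Y * (P * P)"
    using anti by (simp add: algebra_simps eq_diff_eq[symmetric] flip: add_diff_eq)
  also have "Y * C * P = C * (Y * P)" by (metis CY mult.assoc)
  finally have "Y * P * (Y * P) = C * (Y * P) + C * (Y * P) - Y * Y * (P * P)" .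
  moreover have "Y * P * C = C * (Y * P)" by (metis CY CP mult.assoc)
  ultimately show ?thesis by (simp add: algebra_simps)
qed

lemma square_diff_factorization:
  fixes Y u v w :: "'a::{ring,monoid_mult}"
  assumes anti: "w * Y + Y * w = u * v + u * v" and CY: "u * v * Y = Y * (u * v)"
    and uv: "v * u = u * v" and uw: "w * u = u * w" and vw: "w * v = v * w"
    and YY: "Y * Y = u * u + v * v - w * w"
  shows "(Y * w - u * v) * (Y * w - u * v) = (u - w) * (u + w) * (v - w) * (v + w)"
proof -
  have "u * v * w = w * (u * v)" by (metis uw vw mult.assoc)
  then have "(Y * w - u * v) * (Y * w - u * v) = u * v * (u * v) - Y * Y * (w * w)"
    using square_diff_of_anticommutator[OF anti CY] by simp
  also have "\<dots> = (u - w) * (u + w) * (v - w) * (v + w)"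
    unfolding YY using uv uw vw
    by (simp add: algebra_simps uv[THEN mult_left_rewrite] uw[THEN mult_left_rewrite] vw[THEN mult_left_rewrite])
  finally show ?thesis .
qed

section \<open>Relations between the Gamma elements of disjoint blocks\<close>

text \<open>For \<open>H = 1/2\<close> this is \<open>\<Gamma>\<^sub>A = S\<^sub>A R\<^sub>A\<close> with \<open>S\<^sub>A = ([X\<^sub>A, D\<^sub>A] - 1)/2\<close>.\<close>
definition gamma_elem :: "'a::{ring,monoid_mult} \<Rightarrow> 'a \<Rightarrow> 'a \<Rightarrow> 'a \<Rightarrow> 'a" where
  "gamma_elem H X D R = H * (X * D - D * X - 1) * R"

lemma commute_gamma_elem:
  fixes X D R H Y :: "'a::{ring,monoid_mult}"
  assumes "Y * X = X * Y" "Y * D = D * Y" "Y * R = R * Y" "Y * H = H * Y"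
  shows "Y * gamma_elem H X D R = gamma_elem H X D R * Y"
proof -
  have "Y * (X * D) = (X * D) * Y" "Y * (D * X) = (D * X) * Y"
    using assms(1,2) by (metis mult.assoc)+
  then have "Y * (X * D - D * X - 1) = (X * D - D * X - 1) * Y"
    by (simp add: algebra_simps)
  then show ?thesis
    using assms(3,4) unfolding gamma_elem_def by (metis mult.assoc)
qed

lemma anticommute_commute_gamma_elem:
  fixes X D R H Y :: "'a::{ring,monoid_mult}"
  assumes "Y * X = - (X * Y)" "Y * D = - (D * Y)" "Y * R = R * Y" "Y * H = H * Y"
  shows "Y * gamma_elem H X D R = gamma_elem H X D R * Y"
proof -
  have "Y * (X * D) = (X * D) * Y" "Y * (D * X) = (D * X) * Y"
    using assms(1,2) by (metis mult.assoc minus_mult_left minus_mult_right minus_minus)+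
  then have "Y * (X * D - D * X - 1) = (X * D - D * X - 1) * Y"
    by (simp add: algebra_simps)
  then show ?thesis
    using assms(3,4) unfolding gamma_elem_def by (metis mult.assoc)
qed

locale half_ring =
  fixes H :: "'a::{ring,monoid_mult}"
  assumes half_add_half: "H + H = 1"
    and half_commute: "H * a = a * H"
begin

lemma half_mult_double: "H * x + H * x = x"
  by (metis distrib_right half_add_half mult_1_left)

lemma half_mult_double_left: "H * x + (H * x + y) = x + y"
  by (metis add.assoc half_mult_double)

end

locale dunkl_block = half_ring H for H :: "'a::{ring,monoid_mult}" +
  fixes X D R G :: 'a
  assumes R_R: "R * R = 1"
    and R_X: "R * X = - (X * R)"
    and R_D: "R * D = - (D * R)"
    and G_def: "G = gamma_elem H X D R"
    and X_G: "X * G = G * X"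
    and D_G: "D * G = G * D"
begin

lemma R_G: "R * G = G * R"
  unfolding G_def by (rule anticommute_commute_gamma_elem[OF R_X R_D refl half_commute[symmetric]])

lemma D_X: "D * X = X * D - G * R - G * R - 1"
proof -
  have "G * R + G * R = X * D - D * X - 1"
    unfolding G_def gamma_elem_def by (simp add: mult.assoc R_R half_mult_double)
  then show ?thesis by (simp add: algebra_simps)
qed

lemmas reorder = R_R R_X R_D D_X X_G D_G R_G
  half_commute[of X, symmetric] half_commute[of D, symmetric]
  half_commute[of R, symmetric] half_commute[of G, symmetric]

lemma neg_reflection: "dunkl_block H X D (- R) (- G)"
proof
  show "- G = gamma_elem H X D (- R)" by (simp add: G_def gamma_elem_def)
qed (simp_all add: R_R R_X R_D X_G D_G)

end

locale dunkl_block_pair =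
  b1: dunkl_block H X1 D1 R1 G1 + b2: dunkl_block H X2 D2 R2 G2
  for H :: "'a::{ring,monoid_mult}" and X1 D1 R1 G1 X2 D2 R2 G2 +
  assumes X2_X1: "X2 * X1 = - (X1 * X2)"
    and X2_D1: "X2 * D1 = - (D1 * X2)"
    and D2_X1: "D2 * X1 = - (X1 * D2)"
    and D2_D1: "D2 * D1 = - (D1 * D2)"
    and R2_X1: "R2 * X1 = X1 * R2"
    and R2_D1: "R2 * D1 = D1 * R2"
    and X2_R1: "X2 * R1 = R1 * X2"
    and D2_R1: "D2 * R1 = R1 * D2"
    and R2_R1: "R2 * R1 = R1 * R2"
begin

lemma X2_G1: "X2 * G1 = G1 * X2"
  unfolding b1.G_def
  by (rule anticommute_commute_gamma_elem[OF X2_X1 X2_D1 X2_R1 b1.half_commute[symmetric]])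

lemma D2_G1: "D2 * G1 = G1 * D2"
  unfolding b1.G_def
  by (rule anticommute_commute_gamma_elem[OF D2_X1 D2_D1 D2_R1 b1.half_commute[symmetric]])

lemma R2_G1: "R2 * G1 = G1 * R2"
  unfolding b1.G_def by (rule commute_gamma_elem[OF R2_X1 R2_D1 R2_R1 b1.half_commute[symmetric]])

lemma X1_G2: "X1 * G2 = G2 * X1"
  unfolding b2.G_def
  by (rule anticommute_commute_gamma_elem) (simp_all add: X2_X1 D2_X1 R2_X1 b1.half_commute)

lemma D1_G2: "D1 * G2 = G2 * D1"
  unfolding b2.G_def
  by (rule anticommute_commute_gamma_elem) (simp_all add: X2_D1 D2_D1 R2_D1 b1.half_commute)

lemma R1_G2: "R1 * G2 = G2 * R1"
  unfolding b2.G_def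
  by (rule commute_gamma_elem) (simp_all add: X2_R1 D2_R1 R2_R1 b1.half_commute)

lemma G2_G1: "G2 * G1 = G1 * G2"
  unfolding b1.G_def
  by (rule commute_gamma_elem) (simp_all add: X1_G2 D1_G2 R1_G2 b1.half_commute)

lemmas reorder = b1.reorder b2.reorder X2_X1 X2_D1 D2_X1 D2_D1 R2_X1 R2_D1 X2_R1 D2_R1 R2_R1
  X2_G1 D2_G1 R2_G1 X1_G2 D1_G2 R1_G2 G2_G1

text \<open>Oriented from left to right, the relations rewrite monomials in the generators to a normal form;
  \<open>mult_left_rewrite\<close> makes each relation apply inside right-nested products.\<close>
lemmas normalize = reorder reorder[THEN mult_left_rewrite]
  b1.half_add_half b1.half_mult_double b1.half_mult_double_left algebra_simps diff_eq_eq eq_diff_eq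

lemma block_union: "dunkl_block H (X1 + X2) (D1 + D2) (R1 * R2) (gamma_elem H (X1 + X2) (D1 + D2) (R1 * R2))"
  by unfold_locales (simp_all add: gamma_elem_def normalize)

lemma neg_reflection: "dunkl_block_pair H X1 D1 (- R1) (- G1) X2 D2 R2 G2"
  by (intro dunkl_block_pair.intro b1.neg_reflection b2.dunkl_block_axioms dunkl_block_pair_axioms.intro)
     (simp_all add: X2_X1 X2_D1 D2_X1 D2_D1 R2_X1 R2_D1 X2_R1 D2_R1 R2_R1)

end

locale dunkl_block_triple =
  p12: dunkl_block_pair H X1 D1 R1 G1 X2 D2 R2 G2 +
  p13: dunkl_block_pair H X1 D1 R1 G1 X3 D3 R3 G3 +
  p23: dunkl_block_pair H X2 D2 R2 G2 X3 D3 R3 G3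
  for H :: "'a::{ring,monoid_mult}" and X1 D1 R1 G1 X2 D2 R2 G2 X3 D3 R3 G3
begin

definition "G12 = gamma_elem H (X1 + X2) (D1 + D2) (R1 * R2)"
definition "G13 = gamma_elem H (X1 + X3) (D1 + D3) (R1 * R3)"
definition "G23 = gamma_elem H (X2 + X3) (D2 + D3) (R2 * R3)"
definition "G123 = gamma_elem H (X1 + X2 + X3) (D1 + D2 + D3) (R1 * R2 * R3)"

lemmas normalize = p12.normalize p13.normalize p23.normalize
  G12_def G13_def G23_def G123_def gamma_elem_def

lemma anticommute_G12:
  "(G12 - H) * (G23 + G13) + (G23 + G13) * (G12 - H) =
      (G3 + G123) * (G1 + G2) + (G3 + G123) * (G1 + G2)"
  by (simp add: normalize)

lemma square_G23_G13:
  "(G23 + G13) * (G23 + G13) =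
      (G3 + G123) * (G3 + G123) + (G1 + G2) * (G1 + G2) - (G12 - H) * (G12 - H)"
  by (simp add: normalize)

lemma commute_G23_G13: "(G3 + G123) * (G1 + G2) * (G23 + G13) =
    (G23 + G13) * ((G3 + G123) * (G1 + G2))"
  by (simp add: normalize)

lemma commute_G1_G2_G3_G123: "(G1 + G2) * (G3 + G123) = (G3 + G123) * (G1 + G2)"
  by (simp add: normalize)

lemma commute_G12_G3_G123: "(G12 - H) * (G3 + G123) = (G3 + G123) * (G12 - H)"
  by (simp add: normalize)

lemma commute_G12_G1_G2: "(G12 - H) * (G1 + G2) = (G1 + G2) * (G12 - H)"
  by (simp add: normalize)

lemma square_factorization_pos:
  "((G23 + G13) * (G12 - H) - (G3 + G123) * (G1 + G2)) * ((G23 + G13) * (G12 - H) - (G3 + G123) * (G1 + G2))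
   = (G123 - G12 + G3 + H) * (G123 + G12 + G3 - H) * (G1 - G12 + G2 + H) * (G1 + G12 + G2 - H)"
proof -
  have "G3 + G123 - (G12 - H) = G123 - G12 + G3 + H" "G3 + G123 + (G12 - H) = G123 + G12 + G3 - H"
    "G1 + G2 - (G12 - H) = G1 - G12 + G2 + H" "G1 + G2 + (G12 - H) = G1 + G12 + G2 - H"
    by (simp_all add: algebra_simps)
  with square_diff_factorization[OF anticommute_G12 commute_G23_G13 commute_G1_G2_G3_G123 commute_G12_G3_G123 commute_G12_G1_G2 square_G23_G13]
  show ?thesis by simp
qed

lemma neg_reflection: "dunkl_block_triple H X1 D1 (- R1) (- G1) X2 D2 R2 G2 X3 D3 R3 G3"
  by (intro dunkl_block_triple.intro p12.neg_reflection p13.neg_reflection p23.dunkl_block_pair_axioms)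

theorem square_factorization:
  assumes "S = 1 \<or> S = -1"
  shows "((G23 + S * G13) * (G12 - S * H) - (G3 + S * G123) * (G1 + S * G2))
       * ((G23 + S * G13) * (G12 - S * H) - (G3 + S * G123) * (G1 + S * G2))
       = (G123 - G12 + S * G3 + S * H) * (G123 + G12 + S * G3 - S * H)
       * (G1 - G12 + S * G2 + S * H) * (G1 + G12 + S * G2 - S * H)"
  using assms
proof
  assume "S = 1"
  then show ?thesis using square_factorization_pos by simp
next
  assume S: "S = -1"
  interpret neg: dunkl_block_triple H X1 D1 "- R1" "- G1" X2 D2 R2 G2 X3 D3 R3 G3
    by (rule neg_reflection)
  have "neg.G12 = - G12" "neg.G13 = - G13" "neg.G23 = G23" "neg.G123 = - G123"
    by (simp_all add: neg.G12_def neg.G13_def neg.G23_def neg.G123_def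
        G12_def G13_def G23_def G123_def gamma_elem_def)
  then show ?thesis
    by (intro square_eq_product_negate[OF neg.square_factorization_pos]) (simp_all add: S algebra_simps)
qed

end

section \<open>Polynomial functions, partial derivatives and divided differences\<close>

text \<open>Polynomials in any number of variables, so that every coordinate function \<open>x\<^sub>i\<close> is available.\<close>
definition polys :: "('v::real_normed_vector) fn set" where "polys = (\<Union>m. polyV m)"

definition sign_flip :: "nat set \<Rightarrow> (nat \<Rightarrow> real) \<Rightarrow> (nat \<Rightarrow> real)" where
  "sign_flip A x = (\<lambda>j. if j \<in> A then - x j else x j)"

lemma reflset_eq_sign_flip: "reflset A f = (\<lambda>x. f (sign_flip A x))"
  by (simp add: reflset_def sign_flip_def)

lemma sign_flip_singleton: "sign_flip {i} x = x(i := - x i)"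
  by (auto simp: sign_flip_def)

lemma polyfun_mono: "p \<in> polyfun m \<Longrightarrow> m \<le> k \<Longrightarrow> p \<in> polyfun k"
  by (induction p rule: polyfun.induct) (auto intro: polyfun.intros)

lemma polyV_mono: "f \<in> polyV m \<Longrightarrow> m \<le> k \<Longrightarrow> f \<in> polyV k"
  by (induction f rule: polyV.induct) (auto intro: polyV.intros polyfun_mono)

lemma polysI: "f \<in> polyV m \<Longrightarrow> f \<in> polys" by (auto simp: polys_def)

lemma polys_zero: "(\<lambda>x. 0) \<in> polys"
  by (rule polysI[OF polyV.vzero])

lemma polys_add: "f \<in> polys \<Longrightarrow> g \<in> polys \<Longrightarrow> (\<lambda>x. f x + g x) \<in> polys"
proof -
  assume "f \<in> polys" "g \<in> polys"
  then obtain m k where "f \<in> polyV m" "g \<in> polyV k" by (auto simp: polys_def)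
  then have "f \<in> polyV (max m k)" "g \<in> polyV (max m k)" by (auto intro: polyV_mono)
  then show ?thesis by (auto intro: polysI polyV.vadd)
qed

lemma polyV_scaleR: "f \<in> polyV m \<Longrightarrow> (\<lambda>x. c *\<^sub>R f x) \<in> polyV m"
proof (induction f rule: polyV.induct)
  case vzero then show ?case by (simp add: polyV.vzero)
next
  case (vsimple p v)
  have "(\<lambda>x. c * p x) \<in> polyfun m" by (rule polyfun.pmul[OF polyfun.pconst vsimple])
  then have "(\<lambda>x. (c * p x) *\<^sub>R v) \<in> polyV m" by (rule polyV.vsimple)
  then show ?case by simp
next
  case (vadd f g)
  have "(\<lambda>x. c *\<^sub>R f x + c *\<^sub>R g x) \<in> polyV m" by (rule polyV.vadd[OF vadd.IH])
  then show ?case by (simp add: scaleR_right_distrib)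
qed

lemma polys_scaleR: "f \<in> polys \<Longrightarrow> (\<lambda>x. c *\<^sub>R f x) \<in> polys"
  by (auto simp: polys_def intro: polyV_scaleR)

lemma polys_uminus: "f \<in> polys \<Longrightarrow> (\<lambda>x. - f x) \<in> polys"
  using polys_scaleR[of f "-1"] by simp

lemma polys_diff: "f \<in> polys \<Longrightarrow> g \<in> polys \<Longrightarrow> (\<lambda>x. f x - g x) \<in> polys"
  using polys_add[of f "\<lambda>x. - g x"] polys_uminus[of g] by simp

lemma polyV_linear: "f \<in> polyV m \<Longrightarrow> linear L \<Longrightarrow> (\<lambda>x. L (f x)) \<in> polyV m"
proof (induction f rule: polyV.induct)
  case vzero then show ?case by (simp add: linear_0 polyV.vzero)
next
  case (vsimple p v)
  then show ?case by (simp add: linear_scale polyV.vsimple)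
next
  case (vadd f g)
  then show ?case by (simp add: linear_add polyV.vadd)
qed

lemma polys_linear: "f \<in> polys \<Longrightarrow> linear L \<Longrightarrow> (\<lambda>x. L (f x)) \<in> polys"
  by (auto simp: polys_def intro: polyV_linear)

lemma polyV_mult_coord: "f \<in> polyV m \<Longrightarrow> i \<in> {1..m} \<Longrightarrow> (\<lambda>x. x i *\<^sub>R f x) \<in> polyV m"
proof (induction f rule: polyV.induct)
  case vzero then show ?case by (simp add: polyV.vzero)
next
  case (vsimple p v)
  have "(\<lambda>x. x i * p x) \<in> polyfun m"
    by (rule polyfun.pmul[OF polyfun.pvar[OF vsimple(2)] vsimple(1)])
  then show ?case using polyV.vsimple by fastforce
next
  case (vadd f g)
  then have "(\<lambda>x. x i *\<^sub>R f x + x i *\<^sub>R g x) \<in> polyV m" by (simp add: polyV.vadd)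
  then show ?case by (simp add: scaleR_right_distrib)
qed

lemma polys_mult_coord: "f \<in> polys \<Longrightarrow> 1 \<le> i \<Longrightarrow> (\<lambda>x. x i *\<^sub>R f x) \<in> polys"
proof -
  assume "f \<in> polys" "1 \<le> i"
  then obtain m where "f \<in> polyV m" by (auto simp: polys_def)
  then have "f \<in> polyV (max m i)" by (auto intro: polyV_mono)
  moreover have "i \<in> {1..max m i}" using \<open>1 \<le> i\<close> by auto
  ultimately show ?thesis by (rule polysI[OF polyV_mult_coord])
qed

lemma polyfun_sign_flip: "p \<in> polyfun m \<Longrightarrow> (\<lambda>x. p (sign_flip A x)) \<in> polyfun m"
proof (induction p rule: polyfun.induct)
  case (pconst c) then show ?case by (rule polyfun.pconst)
next
  case (pvar i)
  show ?case
  proof (cases "i \<in> A")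
    case True
    have "(\<lambda>x. (-1) * x i) \<in> polyfun m"
      by (rule polyfun.pmul[OF polyfun.pconst polyfun.pvar[OF pvar]])
    then show ?thesis using True by (simp add: sign_flip_def)
  next
    case False then show ?thesis using pvar by (simp add: sign_flip_def polyfun.pvar)
  qed
next
  case (padd p q) then show ?case by (simp add: polyfun.padd)
next
  case (pmul p q) then show ?case by (simp add: polyfun.pmul)
qed

lemma polyV_sign_flip: "f \<in> polyV m \<Longrightarrow> (\<lambda>x. f (sign_flip A x)) \<in> polyV m"
  by (induction f rule: polyV.induct) (auto intro: polyV.intros polyfun_sign_flip)

lemma polys_reflset: "f \<in> polys \<Longrightarrow> reflset A f \<in> polys"
  by (auto simp: polys_def reflset_eq_sign_flip intro: polyV_sign_flip)

lemma polyfun_flip_coord: "p \<in> polyfun m \<Longrightarrow> (\<lambda>x. p (x(i := - x i))) \<in> polyfun m"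
  using polyfun_sign_flip[of p m "{i}"] by (simp add: sign_flip_singleton)

lemma polyfun_has_partial_derivative: "p \<in> polyfun m \<Longrightarrow>
    \<exists>q\<in>polyfun m. \<forall>x. ((\<lambda>t. p (x(i:=t))) has_real_derivative q x) (at (x i))"
proof (induction p rule: polyfun.induct)
  case (pconst c)
  show ?case by (rule bexI[of _ "\<lambda>x. 0"]) (auto intro: polyfun.pconst)
next
  case (pvar j)
  show ?case
  proof (cases "j = i")
    case True
    show ?thesis by (rule bexI[of _ "\<lambda>x. 1"]) (auto simp: True intro: polyfun.pconst)
  next
    case False
    show ?thesis by (rule bexI[of _ "\<lambda>x. 0"]) (auto simp: False intro: polyfun.pconst)
  qed
next
  case (padd p q)
  from padd.IH obtain p' q' where "p' \<in> polyfun m" "q' \<in> polyfun m"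
    and dp: "\<forall>x. ((\<lambda>t. p (x(i:=t))) has_real_derivative p' x) (at (x i))"
    and dq: "\<forall>x. ((\<lambda>t. q (x(i:=t))) has_real_derivative q' x) (at (x i))" by blast
  have "\<forall>x. ((\<lambda>t. p (x(i:=t)) + q (x(i:=t))) has_real_derivative (p' x + q' x)) (at (x i))"
    using DERIV_add dp dq by blast
  moreover have "(\<lambda>x. p' x + q' x) \<in> polyfun m" using \<open>p' \<in> _\<close> \<open>q' \<in> _\<close> by (rule polyfun.padd)
  ultimately show ?case by (intro bexI[where x="\<lambda>x. p' x + q' x"])
next
  case (pmul p q)
  from pmul.IH obtain p' q' where "p' \<in> polyfun m" "q' \<in> polyfun m"
    and dp: "\<forall>x. ((\<lambda>t. p (x(i:=t))) has_real_derivative p' x) (at (x i))"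
    and dq: "\<forall>x. ((\<lambda>t. q (x(i:=t))) has_real_derivative q' x) (at (x i))" by blast
  have "\<forall>x. ((\<lambda>t. p (x(i:=t)) * q (x(i:=t))) has_real_derivative (p' x * q x + p x * q' x)) (at (x i))"
  proof
    fix x
    show "((\<lambda>t. p (x(i:=t)) * q (x(i:=t))) has_real_derivative (p' x * q x + p x * q' x)) (at (x i))"
      using DERIV_mult[OF dp[rule_format, of x] dq[rule_format, of x]] by (simp add: mult.commute)
  qed
  moreover have "(\<lambda>x. p' x * q x + p x * q' x) \<in> polyfun m"
    by (intro polyfun.padd polyfun.pmul \<open>p' \<in> _\<close> \<open>q' \<in> _\<close> pmul.hyps)
  ultimately show ?case by (intro bexI[where x="\<lambda>x. p' x * q x + p x * q' x"])
qed

lemma polyV_has_partial_derivative: "f \<in> polyV m \<Longrightarrow>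
    \<exists>g\<in>polyV m. \<forall>x. ((\<lambda>t. f (x(i:=t))) has_vector_derivative g x) (at (x i))"
proof (induction f rule: polyV.induct)
  case vzero
  show ?case by (rule bexI[of _ "\<lambda>x. 0"]) (auto intro: polyV.vzero)
next
  case (vsimple p v)
  from polyfun_has_partial_derivative[OF vsimple] obtain q where q: "q \<in> polyfun m"
    "\<forall>x. ((\<lambda>t. p (x(i:=t))) has_real_derivative q x) (at (x i))" by blast
  have "\<forall>x. ((\<lambda>t. p (x(i:=t)) *\<^sub>R v) has_vector_derivative q x *\<^sub>R v) (at (x i))"
  proof
    fix x
    show "((\<lambda>t. p (x(i:=t)) *\<^sub>R v) has_vector_derivative q x *\<^sub>R v) (at (x i))"
      using has_vector_derivative_scaleR[OF q(2)[rule_format, of x] has_vector_derivative_const[of v]]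
        by simp
  qed
  moreover have "(\<lambda>x. q x *\<^sub>R v) \<in> polyV m" using q(1) by (rule polyV.vsimple)
  ultimately show ?case by (intro bexI[where x="\<lambda>x. q x *\<^sub>R v"])
next
  case (vadd f g)
  from vadd.IH obtain f' g' where "f' \<in> polyV m" "g' \<in> polyV m"
    and df: "\<forall>x. ((\<lambda>t. f (x(i:=t))) has_vector_derivative f' x) (at (x i))"
    and dg: "\<forall>x. ((\<lambda>t. g (x(i:=t))) has_vector_derivative g' x) (at (x i))" by blast
  have "\<forall>x. ((\<lambda>t. f (x(i:=t)) + g (x(i:=t))) has_vector_derivative (f' x + g' x)) (at (x i))"
    using has_vector_derivative_add df dg by blast
  moreover have "(\<lambda>x. f' x + g' x) \<in> polyV m" using \<open>f' \<in> _\<close> \<open>g' \<in> _\<close> by (rule polyV.vadd)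
  ultimately show ?case by (intro bexI[where x="\<lambda>x. f' x + g' x"])
qed

lemma pd_eqI:
  assumes "\<forall>x. ((\<lambda>t. f (x(i:=t))) has_vector_derivative g x) (at (x i))"
  shows "pd i f = g"
  using assms by (auto simp: pd_def fun_eq_iff intro: vector_derivative_at)

lemma pd_polyV: "f \<in> polyV m \<Longrightarrow> pd i f \<in> polyV m"
  using polyV_has_partial_derivative[of f m i] pd_eqI by metis

lemma pd_vector_derivative_polyV: "f \<in> polyV m \<Longrightarrow>
    ((\<lambda>t. f (x(i:=t))) has_vector_derivative pd i f x) (at (x i))"
  using polyV_has_partial_derivative[of f m i] pd_eqI by metis

lemma pd_vector_derivative_polyV_at: "f \<in> polyV m \<Longrightarrow>
    ((\<lambda>t. f (x(i:=t))) has_vector_derivative pd i f (x(i:=s))) (at s)"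
  using pd_vector_derivative_polyV[where f=f and m=m and i=i and x="x(i:=s)"] by simp

lemma pd_polyfun: "p \<in> polyfun m \<Longrightarrow>
    pd i p \<in> polyfun m \<and> (\<forall>x. ((\<lambda>t. p (x(i:=t))) has_real_derivative pd i p x) (at (x i)))"
proof -
  assume p: "p \<in> polyfun m"
  from polyfun_has_partial_derivative[OF p] obtain q where q: "q \<in> polyfun m" "\<forall>x. ((\<lambda>t. p (x(i:=t))) has_real_derivative q x) (at (x i))"
    by blast
  have "pd i p = q"
    by (rule pd_eqI) (use q(2) in \<open>simp add: has_real_derivative_iff_has_vector_derivative\<close>)
  then show ?thesis using q by simp
qed

definition real_polys :: "((nat \<Rightarrow> real) \<Rightarrow> real) set" where "real_polys = (\<Union>m. polyfun m)"

lemma real_polysI: "p \<in> polyfun m \<Longrightarrow> p \<in> real_polys" by (auto simp: real_polys_def)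

lemma real_polys_common_dim: "p \<in> real_polys \<Longrightarrow> q \<in> real_polys \<Longrightarrow>
    (\<And>m. p \<in> polyfun m \<Longrightarrow> q \<in> polyfun m \<Longrightarrow> P) \<Longrightarrow> P"
proof -
  assume "p \<in> real_polys" "q \<in> real_polys" and H: "\<And>m. p \<in> polyfun m \<Longrightarrow> q \<in> polyfun m \<Longrightarrow> P"
  then obtain a b where "p \<in> polyfun a" "q \<in> polyfun b" by (auto simp: real_polys_def)
  then show P by (meson H max.cobounded1 max.cobounded2 polyfun_mono)
qed

lemma real_polys_mult: "p \<in> real_polys \<Longrightarrow> q \<in> real_polys \<Longrightarrow> (\<lambda>x. p x * q x) \<in> real_polys"
  by (erule real_polys_common_dim, assumption) (auto intro: real_polysI polyfun.pmul)

lemma pd_eqI_real: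
  assumes "\<forall>x. ((\<lambda>t. p (x(i:=t))) has_real_derivative g x) (at (x i))"
  shows "pd i p = g"
  using assms by (intro pd_eqI) (simp add: has_real_derivative_iff_has_vector_derivative)

lemma pd_has_real_derivative: "p \<in> real_polys \<Longrightarrow>
    ((\<lambda>t. p (x(i:=t))) has_real_derivative pd i p x) (at (x i))"
  unfolding real_polys_def using pd_polyfun by blast

lemma pd_real_polys: "p \<in> real_polys \<Longrightarrow> pd i p \<in> real_polys"
  unfolding real_polys_def using pd_polyfun by blast

lemma pd_const_real: "pd i (\<lambda>x. c) = (\<lambda>x. 0::real)"
  by (rule pd_eqI_real) simp

lemma pd_coord: "pd i (\<lambda>x. x j) = (\<lambda>x. if i = j then 1 else 0::real)"
proof (rule pd_eqI_real, rule allI)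
  fix x :: "nat \<Rightarrow> real"
  show "((\<lambda>t. (x(i:=t)) j) has_real_derivative (if i = j then 1 else 0)) (at (x i))"
    by (cases "i = j") auto
qed

lemma pd_add_real: "p \<in> real_polys \<Longrightarrow> q \<in> real_polys \<Longrightarrow>
    pd i (\<lambda>x. p x + q x) = (\<lambda>x. pd i p x + pd i q x)"
  by (rule pd_eqI_real) (auto intro!: DERIV_add pd_has_real_derivative)

lemma pd_mult_real: "p \<in> real_polys \<Longrightarrow> q \<in> real_polys \<Longrightarrow>
    pd i (\<lambda>x. p x * q x) = (\<lambda>x. pd i p x * q x + p x * pd i q x)"
proof (rule pd_eqI_real, rule allI)
  fix x :: "nat \<Rightarrow> real"
  assume "p \<in> real_polys" "q \<in> real_polys"
  show "((\<lambda>t. p (x(i:=t)) * q (x(i:=t))) has_real_derivative (pd i p x * q x + p x * pd i q x)) (at (x i))"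
    using DERIV_mult[OF pd_has_real_derivative[OF \<open>p \<in> _\<close>, of x i] pd_has_real_derivative[OF \<open>q \<in> _\<close>, of x i]]
      by (simp add: mult.commute)
qed

lemma pd_commute_polyfun: "p \<in> polyfun m \<Longrightarrow> pd i (pd j p) = pd j (pd i p)"
proof (induction p rule: polyfun.induct)
  case (pconst c) then show ?case by (simp add: pd_const_real)
next
  case (pvar k) then show ?case by (simp add: pd_coord pd_const_real)
next
  case (padd p q)
  have pp: "p \<in> real_polys" "q \<in> real_polys" using padd.hyps by (auto intro: real_polysI)
  have "pd i (pd j (\<lambda>x. p x + q x)) = (\<lambda>x. pd i (pd j p) x + pd i (pd j q) x)"
    using pp by (simp add: pd_add_real pd_real_polys)
  moreover have "pd j (pd i (\<lambda>x. p x + q x)) = (\<lambda>x. pd j (pd i p) x + pd j (pd i q) x)"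
    using pp by (simp add: pd_add_real pd_real_polys)
  ultimately show ?case using padd.IH by simp
next
  case (pmul p q)
  have pp: "p \<in> real_polys" "q \<in> real_polys" using pmul.hyps by (auto intro: real_polysI)
  have "pd i (pd j (\<lambda>x. p x * q x)) =
      (\<lambda>x. (pd i (pd j p) x * q x + pd j p x * pd i q x) + (pd i p x * pd j q x + p x * pd i (pd j q) x))"
    using pp by (simp add: pd_mult_real pd_add_real pd_real_polys real_polys_mult)
  moreover have "pd j (pd i (\<lambda>x. p x * q x)) =
      (\<lambda>x. (pd j (pd i p) x * q x + pd i p x * pd j q x) + (pd j p x * pd i q x + p x * pd j (pd i q) x))"
    using pp by (simp add: pd_mult_real pd_add_real pd_real_polys real_polys_mult)
  ultimately show ?case using pmul.IH by (simp add: algebra_simps)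
qed

lemma pd_polys: "f \<in> polys \<Longrightarrow> pd i f \<in> polys"
  by (auto simp: polys_def intro: pd_polyV)

lemma pd_vector_derivative: "f \<in> polys \<Longrightarrow>
    ((\<lambda>t. f (x(i:=t))) has_vector_derivative pd i f x) (at (x i))"
  by (auto simp: polys_def intro: pd_vector_derivative_polyV)

lemma pd_vector_derivative_at: "f \<in> polys \<Longrightarrow>
    ((\<lambda>t. f (x(i:=t))) has_vector_derivative pd i f (x(i:=s))) (at s)"
  by (auto simp: polys_def intro: pd_vector_derivative_polyV_at)

lemma pd_add: "f \<in> polys \<Longrightarrow> g \<in> polys \<Longrightarrow> pd i (\<lambda>x. f x + g x) = (\<lambda>x. pd i f x + pd i g x)"
  by (rule pd_eqI) (auto intro!: has_vector_derivative_add pd_vector_derivative)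

lemma pd_zero: "pd i (\<lambda>x. 0) = (\<lambda>x. (0::'v::real_normed_vector))"
  by (rule pd_eqI) simp

lemma pd_scaleR: "f \<in> polys \<Longrightarrow> pd i (\<lambda>x. c *\<^sub>R f x) = (\<lambda>x. c *\<^sub>R pd i f x)"
proof (rule pd_eqI, rule allI)
  fix x :: "nat \<Rightarrow> real"
  assume "f \<in> polys"
  show "((\<lambda>t. c *\<^sub>R f (x(i:=t))) has_vector_derivative c *\<^sub>R pd i f x) (at (x i))"
    using has_vector_derivative_scaleR[OF DERIV_const pd_vector_derivative[OF \<open>f \<in> _\<close>, of x i]]
      by simp
qed

lemma pd_scaleR_vector: "p \<in> real_polys \<Longrightarrow> pd i (\<lambda>x. p x *\<^sub>R v) = (\<lambda>x. pd i p x *\<^sub>R v)"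
proof (rule pd_eqI, rule allI)
  fix x :: "nat \<Rightarrow> real"
  assume "p \<in> real_polys"
  show "((\<lambda>t. p (x(i:=t)) *\<^sub>R v) has_vector_derivative pd i p x *\<^sub>R v) (at (x i))"
    using has_vector_derivative_scaleR[OF pd_has_real_derivative[OF \<open>p \<in> _\<close>, of x i] has_vector_derivative_const[of v]]
      by simp
qed

lemma pd_mult_coord: "f \<in> polys \<Longrightarrow>
    pd i (\<lambda>x. x j *\<^sub>R f x) = (\<lambda>x. (if i = j then f x else 0) + x j *\<^sub>R pd i f x)"
proof (rule pd_eqI, rule allI)
  fix x :: "nat \<Rightarrow> real"
  assume f: "f \<in> polys"
  have d1: "((\<lambda>t. (x(i:=t)) j) has_real_derivative (if i = j then 1 else 0)) (at (x i))"
    by (cases "i = j") auto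
  have "((\<lambda>t. (x(i:=t)) j *\<^sub>R f (x(i:=t))) has_vector_derivative ((x(i:=x i)) j *\<^sub>R pd i f x + (if i = j then 1 else 0) *\<^sub>R f (x(i:=x i)))) (at (x i))"
    by (rule has_vector_derivative_scaleR[OF d1 pd_vector_derivative[OF f, of x i]])
  moreover have "(x(i:=x i)) j *\<^sub>R pd i f x + (if i = j then 1 else 0) *\<^sub>R f (x(i:=x i)) =
      (if i = j then f x else 0) + x j *\<^sub>R pd i f x"
    by simp
  ultimately show "((\<lambda>t. (x(i:=t)) j *\<^sub>R f (x(i:=t))) has_vector_derivative (if i = j then f x else 0) + x j *\<^sub>R pd i f x) (at (x i))"
    by metis
qed

lemma sign_flip_upd: "sign_flip A (x(i:=t)) = (sign_flip A x)(i := if i \<in> A then - t else t)"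
  by (auto simp: sign_flip_def)

lemma pd_reflset: "f \<in> polys \<Longrightarrow>
    pd i (reflset A f) = (\<lambda>x. (if i \<in> A then -1 else 1) *\<^sub>R reflset A (pd i f) x)"
proof (rule pd_eqI, rule allI)
  fix x :: "nat \<Rightarrow> real"
  assume f: "f \<in> polys"
  let ?y = "sign_flip A x"
  show "((\<lambda>t. reflset A f (x(i:=t))) has_vector_derivative (if i \<in> A then -1 else 1) *\<^sub>R reflset A (pd i f) x) (at (x i))"
  proof (cases "i \<in> A")
    case True
    have yi: "?y i = - x i" using True by (simp add: sign_flip_def)
    have e: "(\<lambda>t. reflset A f (x(i:=t))) = (\<lambda>s. f (?y(i:=s))) \<circ> (\<lambda>t. - t)"
      using True by (simp add: reflset_eq_sign_flip sign_flip_upd o_def)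
    have d1: "((\<lambda>t. - t) has_vector_derivative (-1)) (at (x i))"
      using has_vector_derivative_minus[OF has_vector_derivative_id] by simp
    have yy: "?y(i := - x i) = ?y" using yi by (metis fun_upd_triv)
    have d2: "((\<lambda>s. f (?y(i:=s))) has_vector_derivative pd i f ?y) (at (- x i))"
      using pd_vector_derivative_at[OF f, of ?y i "- x i"] yy by simp
    show ?thesis
      using vector_diff_chain_at[OF d1 d2] True unfolding e by (simp add: reflset_eq_sign_flip)
  next
    case False
    have yi: "?y i = x i" using False by (simp add: sign_flip_def)
    have e: "(\<lambda>t. reflset A f (x(i:=t))) = (\<lambda>s. f (?y(i:=s)))"
      using False by (simp add: reflset_eq_sign_flip sign_flip_upd)
    have "((\<lambda>s. f (?y(i:=s))) has_vector_derivative pd i f ?y) (at (?y i))"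
      by (rule pd_vector_derivative[OF f])
    then show ?thesis
      using False yi unfolding e by (simp add: reflset_eq_sign_flip)
  qed
qed

lemma pd_linear_polyV: "f \<in> polyV m \<Longrightarrow> linear L \<Longrightarrow> pd i (\<lambda>x. L (f x)) = (\<lambda>x. L (pd i f x))"
proof (induction f rule: polyV.induct)
  case vzero then show ?case by (simp add: linear_0 pd_zero)
next
  case (vsimple p v)
  from vsimple(1) have "p \<in> real_polys" by (rule real_polysI)
  then show ?case using vsimple by (simp add: linear_scale pd_scaleR_vector)
next
  case (vadd f g)
  have fg: "f \<in> polys" "g \<in> polys" "(\<lambda>x. L (f x)) \<in> polys" "(\<lambda>x. L (g x)) \<in> polys"
    using vadd by (auto intro: polysI polyV_linear)
  have "pd i (\<lambda>x. L (f x + g x)) = pd i (\<lambda>x. L (f x) + L (g x))"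
    using vadd by (simp add: linear_add)
  also have "\<dots> = (\<lambda>x. pd i (\<lambda>x. L (f x)) x + pd i (\<lambda>x. L (g x)) x)"
    using fg by (intro pd_add)
  also have "\<dots> = (\<lambda>x. L (pd i (\<lambda>x. f x + g x) x))"
    using vadd fg by (simp add: pd_add linear_add)
  finally show ?case .
qed

lemma pd_linear: "f \<in> polys \<Longrightarrow> linear L \<Longrightarrow> pd i (\<lambda>x. L (f x)) = (\<lambda>x. L (pd i f x))"
  by (auto simp: polys_def intro: pd_linear_polyV)

lemma pd_commute_polyV: "f \<in> polyV m \<Longrightarrow> pd i (pd j f) = pd j (pd i f)"
proof (induction f rule: polyV.induct)
  case vzero then show ?case by (simp add: pd_zero)
next
  case (vsimple p v)
  from vsimple(1) have "p \<in> real_polys" by (rule real_polysI)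
  then show ?case using vsimple by (simp add: pd_scaleR_vector pd_real_polys pd_commute_polyfun)
next
  case (vadd f g)
  then have "f \<in> polys" "g \<in> polys" by (auto intro: polysI)
  then show ?case using vadd by (simp add: pd_add pd_polys)
qed

lemma pd_commute: "f \<in> polys \<Longrightarrow> pd i (pd j f) = pd j (pd i f)"
  by (auto simp: polys_def intro: pd_commute_polyV)

lemma polyfun_divided_difference: "p \<in> polyfun m \<Longrightarrow>
    \<exists>q\<in>polyfun m. \<forall>x. p x - p (x(i := - x i)) = x i * q x"
proof (induction p rule: polyfun.induct)
  case (pconst c)
  show ?case by (rule bexI[where x="\<lambda>x. 0"]) (auto intro: polyfun.pconst)
next
  case (pvar j)
  show ?case
  proof (cases "j = i")
    case True
    show ?thesis by (rule bexI[where x="\<lambda>x. 2"]) (simp_all add: True polyfun.pconst)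
  next
    case False
    show ?thesis by (rule bexI[where x="\<lambda>x. 0"]) (simp_all add: False polyfun.pconst)
  qed
next
  case (padd p q)
  from padd.IH obtain p' q' where "p' \<in> polyfun m" "q' \<in> polyfun m"
    and dp: "\<forall>x. p x - p (x(i := - x i)) = x i * p' x"
    and dq: "\<forall>x. q x - q (x(i := - x i)) = x i * q' x" by blast
  have "\<forall>x. (p x + q x) - (p (x(i := - x i)) + q (x(i := - x i))) = x i * (p' x + q' x)"
  proof
    fix x
    have a: "p (x(i := - x i)) = p x - x i * p' x"
      using dp[rule_format, of x] by (simp add: algebra_simps)
    have b: "q (x(i := - x i)) = q x - x i * q' x"
      using dq[rule_format, of x] by (simp add: algebra_simps)
    show "(p x + q x) - (p (x(i := - x i)) + q (x(i := - x i))) = x i * (p' x + q' x)"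
      unfolding a b by (simp add: algebra_simps)
  qed
  moreover have "(\<lambda>x. p' x + q' x) \<in> polyfun m" using \<open>p' \<in> _\<close> \<open>q' \<in> _\<close> by (rule polyfun.padd)
  ultimately show ?case by (intro bexI[where x="\<lambda>x. p' x + q' x"])
next
  case (pmul p q)
  from pmul.IH obtain p' q' where "p' \<in> polyfun m" "q' \<in> polyfun m"
    and dp: "\<forall>x. p x - p (x(i := - x i)) = x i * p' x"
    and dq: "\<forall>x. q x - q (x(i := - x i)) = x i * q' x" by blast
  have "\<forall>x. p x * q x - p (x(i := - x i)) * q (x(i := - x i)) =
      x i * (p x * q' x + p' x * q (x(i := - x i)))"
  proof
    fix x
    have a: "p (x(i := - x i)) = p x - x i * p' x"
      using dp[rule_format, of x] by (simp add: algebra_simps)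
    have b: "q (x(i := - x i)) = q x - x i * q' x"
      using dq[rule_format, of x] by (simp add: algebra_simps)
    show "p x * q x - p (x(i := - x i)) * q (x(i := - x i)) =
        x i * (p x * q' x + p' x * q (x(i := - x i)))"
      unfolding a b by (simp add: algebra_simps)
  qed
  moreover have "(\<lambda>x. p x * q' x + p' x * q (x(i := - x i))) \<in> polyfun m"
    by (intro polyfun.padd polyfun.pmul pmul.hyps \<open>p' \<in> _\<close> \<open>q' \<in> _\<close> polyfun_flip_coord)
  ultimately show ?case by (intro bexI[where x="\<lambda>x. p x * q' x + p' x * q (x(i := - x i))"])
qed

lemma polyV_divided_difference: "f \<in> polyV m \<Longrightarrow>
    \<exists>g\<in>polyV m. \<forall>x. f x - f (x(i := - x i)) = x i *\<^sub>R g x"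
proof (induction f rule: polyV.induct)
  case vzero
  show ?case by (rule bexI[where x="\<lambda>x. 0"]) (auto intro: polyV.vzero)
next
  case (vsimple p v)
  from polyfun_divided_difference[OF vsimple] obtain q where q: "q \<in> polyfun m" "\<forall>x. p x - p (x(i := - x i)) = x i * q x"
    by blast
  have "\<forall>x. p x *\<^sub>R v - p (x(i := - x i)) *\<^sub>R v = x i *\<^sub>R (q x *\<^sub>R v)"
    using q(2) by (simp add: scaleR_left_diff_distrib[symmetric])
  moreover have "(\<lambda>x. q x *\<^sub>R v) \<in> polyV m" using q(1) by (rule polyV.vsimple)
  ultimately show ?case by (intro bexI[where x="\<lambda>x. q x *\<^sub>R v"])
next
  case (vadd f g)
  from vadd.IH obtain f' g' where "f' \<in> polyV m" "g' \<in> polyV m"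
    and df: "\<forall>x. f x - f (x(i := - x i)) = x i *\<^sub>R f' x"
    and dg: "\<forall>x. g x - g (x(i := - x i)) = x i *\<^sub>R g' x" by blast
  have "\<forall>x. (f x + g x) - (f (x(i := - x i)) + g (x(i := - x i))) = x i *\<^sub>R (f' x + g' x)"
  proof
    fix x
    have a: "f (x(i := - x i)) = f x - x i *\<^sub>R f' x"
      using df[rule_format, of x] by (simp add: algebra_simps)
    have b: "g (x(i := - x i)) = g x - x i *\<^sub>R g' x"
      using dg[rule_format, of x] by (simp add: algebra_simps)
    show "(f x + g x) - (f (x(i := - x i)) + g (x(i := - x i))) = x i *\<^sub>R (f' x + g' x)"
      unfolding a b by (simp add: algebra_simps)
  qed
  moreover have "(\<lambda>x. f' x + g' x) \<in> polyV m" using \<open>f' \<in> _\<close> \<open>g' \<in> _\<close> by (rule polyV.vadd)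
  ultimately show ?case by (intro bexI[where x="\<lambda>x. f' x + g' x"])
qed

definition divdiff :: "nat \<Rightarrow> ('v::real_normed_vector) oper" where
  "divdiff i f = (\<lambda>x. if x i = 0 then 2 *\<^sub>R pd i f x else (1 / x i) *\<^sub>R (f x - f (x(i := - x i))))"

lemma dunkl_eq_divdiff: "dunkl mu i f = (\<lambda>x. pd i f x + mu i *\<^sub>R divdiff i f x)"
  by (simp add: dunkl_def divdiff_def)

text \<open>The quotient \<open>g\<close> in \<open>f(x) - f(r\<^sub>ix) = x\<^sub>i g(x)\<close> is a polynomial; differentiating this identity at
  \<open>x\<^sub>i = 0\<close> shows that it agrees there with the value \<open>2 \<partial>\<^sub>if\<close> chosen in the definition of \<open>dunkl\<close>.\<close>
lemma divdiff_polyV_eq: "f \<in> polyV m \<Longrightarrow>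
    divdiff i f \<in> polyV m \<and> (\<forall>x. x i *\<^sub>R divdiff i f x = f x - f (x(i := - x i)))"
proof -
  assume f: "f \<in> polyV m"
  from polyV_divided_difference[OF f, of i] obtain g where g: "g \<in> polyV m" "\<forall>x. f x - f (x(i := - x i)) = x i *\<^sub>R g x"
    by blast
  have "divdiff i f = g"
  proof (rule ext)
    fix x :: "nat \<Rightarrow> real"
    show "divdiff i f x = g x"
    proof (cases "x i = 0")
      case False
      then show ?thesis using g(2) by (simp add: divdiff_def)
    next
      case True
      have e: "(\<lambda>t. f (x(i:=t)) - f (x(i := - t))) = (\<lambda>t. t *\<^sub>R g (x(i:=t)))"
      proof
        fix t
        show "f (x(i:=t)) - f (x(i := - t)) = t *\<^sub>R g (x(i:=t))"
          using g(2)[rule_format, of "x(i:=t)"] by simp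
      qed
      have d1: "((\<lambda>t. f (x(i := - t))) has_vector_derivative (- pd i f x)) (at (x i))"
      proof -
        have a: "((\<lambda>t. - t) has_vector_derivative (-1)) (at (x i))"
          using has_vector_derivative_minus[OF has_vector_derivative_id] by simp
        have b: "((\<lambda>s. f (x(i:=s))) has_vector_derivative pd i f x) (at (- x i))"
          using pd_vector_derivative_polyV_at[OF f, of x i "- x i"] True by (simp add: fun_upd_idem)
        show ?thesis using vector_diff_chain_at[OF a b] by (simp add: o_def)
      qed
      have dl: "((\<lambda>t. f (x(i:=t)) - f (x(i := - t))) has_vector_derivative (pd i f x - (- pd i f x))) (at (x i))"
        by (rule has_vector_derivative_diff[OF pd_vector_derivative_polyV[OF f, of x i] d1])
      have dr: "((\<lambda>t. t *\<^sub>R g (x(i:=t))) has_vector_derivative (x i *\<^sub>R pd i g x + 1 *\<^sub>R g (x(i := x i)))) (at (x i))"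
        by (rule has_vector_derivative_scaleR[OF DERIV_ident pd_vector_derivative_polyV[OF g(1)]])
      have "pd i f x - (- pd i f x) = x i *\<^sub>R pd i g x + 1 *\<^sub>R g (x(i := x i))"
        using vector_derivative_at[OF dl] vector_derivative_at[OF dr] e by simp
      then have "2 *\<^sub>R pd i f x = g x" using True by (simp add: scaleR_2 fun_upd_idem)
      then show ?thesis using True by (simp add: divdiff_def)
    qed
  qed
  then show ?thesis using g by simp
qed

lemma divdiff_polyV: "f \<in> polyV m \<Longrightarrow> divdiff i f \<in> polyV m"
  using divdiff_polyV_eq by blast

lemma divdiff_eq_polyV: "f \<in> polyV m \<Longrightarrow> x i *\<^sub>R divdiff i f x = f x - f (x(i := - x i))"
  using divdiff_polyV_eq by blast

lemma polyV_mult_coord_eq_0: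
  fixes g :: "('v::real_normed_vector) fn"
  assumes g: "g \<in> polyV m" and z: "\<forall>x. x i *\<^sub>R g x = 0"
  shows "g = (\<lambda>x. 0)"
proof (rule ext)
  fix x :: "nat \<Rightarrow> real"
  show "g x = 0"
  proof (cases "x i = 0")
    case False then show ?thesis using z by auto
  next
    case True
    let ?h = "\<lambda>t. g (x(i:=t))"
    have c: "continuous (at (x i)) ?h"
      using has_vector_derivative_continuous[OF pd_vector_derivative_polyV[OF g, of x i]] by simp
    then have l1: "(?h \<longlongrightarrow> ?h (x i)) (at (x i))" by (simp add: continuous_at)
    have ev: "\<forall>\<^sub>F t in at (x i). ?h t = 0"
      unfolding eventually_at_filter
    proof (rule always_eventually, intro allI impI)
      fix t assume "t \<noteq> x i"
      then have "t \<noteq> 0" using True by simp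
      moreover have "t *\<^sub>R g (x(i:=t)) = 0" using z[rule_format, of "x(i:=t)"] by simp
      ultimately show "?h t = 0" by simp
    qed
    have l2: "(?h \<longlongrightarrow> 0) (at (x i))"
      by (rule tendsto_eventually) (rule ev)
    have "?h (x i) = 0" using tendsto_unique[OF at_neq_bot l1 l2] .
    then show ?thesis by simp
  qed
qed

lemma divdiff_polys: "f \<in> polys \<Longrightarrow> divdiff i f \<in> polys"
  by (auto simp: polys_def intro: divdiff_polyV)

lemma divdiff_eq: "f \<in> polys \<Longrightarrow> x i *\<^sub>R divdiff i f x = f x - f (x(i := - x i))"
  by (auto simp: polys_def intro: divdiff_eq_polyV)

lemma polys_mult_coord_cancel:
  fixes g h :: "('v::real_normed_vector) fn"
  assumes "g \<in> polys" "h \<in> polys" "\<And>x. x i *\<^sub>R g x = x i *\<^sub>R h x"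
  shows "g = h"
proof -
  have d: "(\<lambda>x. g x - h x) \<in> polys" using assms(1,2) by (rule polys_diff)
  then obtain m where m: "(\<lambda>x. g x - h x) \<in> polyV m" by (auto simp: polys_def)
  have "\<forall>x. x i *\<^sub>R (g x - h x) = 0" using assms(3) by (simp add: scaleR_right_diff_distrib)
  then have "(\<lambda>x. g x - h x) = (\<lambda>x. 0)" by (rule polyV_mult_coord_eq_0[OF m])
  then show ?thesis by (metis (no_types, lifting) eq_iff_diff_eq_0 ext)
qed

lemma reflset_singleton: "reflset {i} f x = f (x(i := - x i))"
  by (simp add: reflset_eq_sign_flip sign_flip_singleton)

lemma pd_diff: "f \<in> polys \<Longrightarrow> g \<in> polys \<Longrightarrow> pd i (\<lambda>x. f x - g x) = (\<lambda>x. pd i f x - pd i g x)"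
proof -
  assume f: "f \<in> polys" and g: "g \<in> polys"
  have "pd i (\<lambda>x. f x + (-1) *\<^sub>R g x) = (\<lambda>x. pd i f x + pd i (\<lambda>x. (-1) *\<^sub>R g x) x)"
    using f g by (intro pd_add polys_scaleR)
  then show ?thesis using pd_scaleR[OF g, of i "-1"] by simp
qed

lemma divdiff_add: "f \<in> polys \<Longrightarrow> g \<in> polys \<Longrightarrow>
    divdiff i (\<lambda>x. f x + g x) = (\<lambda>x. divdiff i f x + divdiff i g x)"
  by (rule polys_mult_coord_cancel[where i=i]) (auto simp: divdiff_polys polys_add divdiff_eq scaleR_right_distrib)

lemma divdiff_scaleR: "f \<in> polys \<Longrightarrow> divdiff i (\<lambda>x. c *\<^sub>R f x) = (\<lambda>x. c *\<^sub>R divdiff i f x)"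
proof (rule polys_mult_coord_cancel[where i=i])
  assume f: "f \<in> polys"
  show "divdiff i (\<lambda>x. c *\<^sub>R f x) \<in> polys" using f by (auto simp: divdiff_polys polys_scaleR)
  show "(\<lambda>x. c *\<^sub>R divdiff i f x) \<in> polys" using f by (auto simp: divdiff_polys polys_scaleR)
  fix x
  have "x i *\<^sub>R (c *\<^sub>R divdiff i f x) = c *\<^sub>R (x i *\<^sub>R divdiff i f x)" by simp
  then show "x i *\<^sub>R divdiff i (\<lambda>x. c *\<^sub>R f x) x = x i *\<^sub>R (c *\<^sub>R divdiff i f x)"
    using f by (simp add: divdiff_eq polys_scaleR scaleR_right_diff_distrib)
qed

lemma divdiff_mult_coord_other: "f \<in> polys \<Longrightarrow> 1 \<le> j \<Longrightarrow> i \<noteq> j \<Longrightarrow>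
    divdiff i (\<lambda>x. x j *\<^sub>R f x) = (\<lambda>x. x j *\<^sub>R divdiff i f x)"
proof (rule polys_mult_coord_cancel[where i=i])
  assume f: "f \<in> polys" and j: "1 \<le> j" and ij: "i \<noteq> j"
  show "divdiff i (\<lambda>x. x j *\<^sub>R f x) \<in> polys"
    using f j by (auto simp: divdiff_polys polys_mult_coord)
  show "(\<lambda>x. x j *\<^sub>R divdiff i f x) \<in> polys"
    using f j by (auto simp: divdiff_polys polys_mult_coord)
  fix x
  have "x i *\<^sub>R (x j *\<^sub>R divdiff i f x) = x j *\<^sub>R (x i *\<^sub>R divdiff i f x)" by simp
  then show "x i *\<^sub>R divdiff i (\<lambda>x. x j *\<^sub>R f x) x = x i *\<^sub>R (x j *\<^sub>R divdiff i f x)"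
    using f j ij by (simp add: divdiff_eq polys_mult_coord scaleR_right_diff_distrib)
qed

lemma divdiff_mult_coord: "f \<in> polys \<Longrightarrow> 1 \<le> i \<Longrightarrow>
    divdiff i (\<lambda>x. x i *\<^sub>R f x) = (\<lambda>x. f x + reflset {i} f x)"
proof (rule polys_mult_coord_cancel[where i=i])
  assume f: "f \<in> polys" and i: "1 \<le> i"
  show "divdiff i (\<lambda>x. x i *\<^sub>R f x) \<in> polys"
    using f i by (auto simp: divdiff_polys polys_mult_coord)
  show "(\<lambda>x. f x + reflset {i} f x) \<in> polys" using f by (auto simp: polys_add polys_reflset)
  fix x
  show "x i *\<^sub>R divdiff i (\<lambda>x. x i *\<^sub>R f x) x = x i *\<^sub>R (f x + reflset {i} f x)"
    using f i by (simp add: divdiff_eq polys_mult_coord reflset_singleton scaleR_right_distrib)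
qed

lemma mult_coord_divdiff: "f \<in> polys \<Longrightarrow> (\<lambda>x. x i *\<^sub>R divdiff i f x) = (\<lambda>x. f x - reflset {i} f x)"
  by (simp add: divdiff_eq reflset_singleton)

lemma divdiff_reflset: "f \<in> polys \<Longrightarrow>
    divdiff i (reflset A f) = (\<lambda>x. (if i \<in> A then -1 else 1) *\<^sub>R reflset A (divdiff i f) x)"
proof (rule polys_mult_coord_cancel[where i=i])
  assume f: "f \<in> polys"
  show "divdiff i (reflset A f) \<in> polys" using f by (auto simp: divdiff_polys polys_reflset)
  show "(\<lambda>x. (if i \<in> A then -1 else 1) *\<^sub>R reflset A (divdiff i f) x) \<in> polys"
    using f by (auto simp: divdiff_polys polys_reflset polys_scaleR)
  fix x
  have yi: "(sign_flip A x) i = (if i \<in> A then -1 else 1) * x i" by (simp add: sign_flip_def)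
  have su: "sign_flip A (x(i := - x i)) = (sign_flip A x)(i := - (sign_flip A x) i)"
    by (auto simp: sign_flip_def)
  have "x i *\<^sub>R ((if i \<in> A then -1 else 1) *\<^sub>R reflset A (divdiff i f) x) =
      (sign_flip A x) i *\<^sub>R divdiff i f (sign_flip A x)"
    using yi by (simp add: reflset_eq_sign_flip)
  also have "\<dots> = f (sign_flip A x) - f (sign_flip A (x(i := - x i)))"
    using f su by (simp add: divdiff_eq)
  also have "\<dots> = x i *\<^sub>R divdiff i (reflset A f) x"
  proof -
    have e: "x i *\<^sub>R divdiff i (reflset A f) x = reflset A f x - reflset A f (x(i:=-x i))"
      by (rule divdiff_eq[OF polys_reflset[OF f]])
    have e2: "reflset A f x - reflset A f (x(i:=-x i)) =
        f (sign_flip A x) - f (sign_flip A (x(i := - x i)))"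
      by (simp add: reflset_eq_sign_flip)
    show ?thesis by (simp only: e e2)
  qed
  finally show "x i *\<^sub>R divdiff i (reflset A f) x =
      x i *\<^sub>R ((if i \<in> A then -1 else 1) *\<^sub>R reflset A (divdiff i f) x)" ..
qed

lemma divdiff_linear: "f \<in> polys \<Longrightarrow> linear L \<Longrightarrow> divdiff i (\<lambda>x. L (f x)) = (\<lambda>x. L (divdiff i f x))"
proof (rule polys_mult_coord_cancel[where i=i])
  assume f: "f \<in> polys" and L: "linear L"
  show "divdiff i (\<lambda>x. L (f x)) \<in> polys" using f L by (auto simp: divdiff_polys polys_linear)
  show "(\<lambda>x. L (divdiff i f x)) \<in> polys" using f L by (auto simp: divdiff_polys polys_linear)
  fix x
  show "x i *\<^sub>R divdiff i (\<lambda>x. L (f x)) x = x i *\<^sub>R L (divdiff i f x)"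
    using f L by (simp add: divdiff_eq polys_linear linear_scale[symmetric] linear_diff)
qed

lemma divdiff_pd_commute: "f \<in> polys \<Longrightarrow> 1 \<le> i \<Longrightarrow> i \<noteq> j \<Longrightarrow> divdiff i (pd j f) = pd j (divdiff i f)"
proof (rule polys_mult_coord_cancel[where i=i])
  assume f: "f \<in> polys" and i: "1 \<le> i" and ij: "i \<noteq> j"
  show "divdiff i (pd j f) \<in> polys" using f by (auto simp: divdiff_polys pd_polys)
  show "pd j (divdiff i f) \<in> polys" using f by (auto simp: divdiff_polys pd_polys)
  fix x
  have "(\<lambda>x. x i *\<^sub>R pd j (divdiff i f) x) = pd j (\<lambda>x. x i *\<^sub>R divdiff i f x)"
    using pd_mult_coord[OF divdiff_polys[OF f], of j i i] ij by simp
  also have "\<dots> = pd j (\<lambda>x. f x - reflset {i} f x)" by (simp add: mult_coord_divdiff[OF f])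
  also have "\<dots> = (\<lambda>x. pd j f x - pd j (reflset {i} f) x)"
    using f by (simp add: pd_diff polys_reflset)
  also have "\<dots> = (\<lambda>x. pd j f x - reflset {i} (pd j f) x)" using f ij by (simp add: pd_reflset)
  finally have "x i *\<^sub>R pd j (divdiff i f) x = pd j f x - reflset {i} (pd j f) x" by meson
  then show "x i *\<^sub>R divdiff i (pd j f) x = x i *\<^sub>R pd j (divdiff i f) x"
    using f by (simp add: divdiff_eq pd_polys reflset_singleton)
qed

lemma divdiff_commute: "f \<in> polys \<Longrightarrow> i \<noteq> j \<Longrightarrow> 1 \<le> j \<Longrightarrow>
    divdiff i (divdiff j f) = divdiff j (divdiff i f)"
proof -
  assume f: "f \<in> polys" and ij: "i \<noteq> j" and j: "1 \<le> j"
  let ?D = "\<lambda>x. divdiff i (divdiff j f) x - divdiff j (divdiff i f) x"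
  have D: "?D \<in> polys" using f by (simp add: polys_diff divdiff_polys)
  have key: "\<And>x. x j *\<^sub>R (x i *\<^sub>R divdiff i (divdiff j f) x) =
      x i *\<^sub>R (x j *\<^sub>R divdiff j (divdiff i f) x)"
  proof -
    fix x :: "nat \<Rightarrow> real"
    have c: "x(i := - x i, j := - x j) = x(j := - x j, i := - x i)" using ij by (rule fun_upd_twist)
    have "x j *\<^sub>R (x i *\<^sub>R divdiff i (divdiff j f) x) =
        x j *\<^sub>R divdiff j f x - (x(i := - x i)) j *\<^sub>R divdiff j f (x(i := - x i))"
      using f ij by (simp add: divdiff_eq divdiff_polys scaleR_right_diff_distrib)
    also have "\<dots> = (f x - f (x(j := - x j))) - (f (x(i := - x i)) - f (x(i := - x i, j := - x j)))"
      using f ij divdiff_eq[OF f, where x="x(i := - x i)" and i=j] divdiff_eq[OF f, where x=x and i=j]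
        by simp
    also have "\<dots> = (f x - f (x(i := - x i))) - (f (x(j := - x j)) - f (x(j := - x j, i := - x i)))"
      using c by (simp add: algebra_simps)
    also have "\<dots> = x i *\<^sub>R divdiff i f x - (x(j := - x j)) i *\<^sub>R divdiff i f (x(j := - x j))"
      using f ij divdiff_eq[OF f, where x="x(j := - x j)" and i=i] divdiff_eq[OF f, where x=x and i=i]
        by simp
    also have "\<dots> = x i *\<^sub>R (x j *\<^sub>R divdiff j (divdiff i f) x)"
      using f ij by (simp add: divdiff_eq divdiff_polys scaleR_right_diff_distrib)
    finally show "x j *\<^sub>R (x i *\<^sub>R divdiff i (divdiff j f) x) =
        x i *\<^sub>R (x j *\<^sub>R divdiff j (divdiff i f) x)" .
  qed
  have g: "(\<lambda>x. x j *\<^sub>R ?D x) = (\<lambda>x. 0)"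
  proof (rule polys_mult_coord_cancel[where i=i])
    show "(\<lambda>x. x j *\<^sub>R ?D x) \<in> polys" using D j by (rule polys_mult_coord)
    show "(\<lambda>x. 0) \<in> polys" by (rule polys_zero)
    fix x show "x i *\<^sub>R (x j *\<^sub>R ?D x) = x i *\<^sub>R 0"
      using key[of x] by (simp add: algebra_simps)
  qed
  have Dz: "?D = (\<lambda>x. 0)"
  proof (rule polys_mult_coord_cancel[where i=j])
    show "?D \<in> polys" by (rule D)
    show "(\<lambda>x. 0) \<in> polys" by (rule polys_zero)
    fix x show "x j *\<^sub>R ?D x = x j *\<^sub>R 0" using fun_cong[OF g, of x] by simp
  qed
  show ?thesis
  proof (rule ext)
    fix x show "divdiff i (divdiff j f) x = divdiff j (divdiff i f) x"
      using fun_cong[OF Dz, of x] by simp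
  qed
qed

section \<open>The ring of linear operators on polynomials\<close>

definition linear_on_polys :: "('v::real_normed_vector) oper \<Rightarrow> bool" where
  "linear_on_polys F \<longleftrightarrow> (\<forall>f\<in>polys. F f \<in> polys) \<and> (\<forall>f\<in>polys. \<forall>g\<in>polys. F (\<lambda>x. f x + g x) = (\<lambda>x. F f x + F g x))
     \<and> (\<forall>c. \<forall>f\<in>polys. F (\<lambda>x. c *\<^sub>R f x) = (\<lambda>x. c *\<^sub>R F f x))"

text \<open>Operators are normalised to vanish outside \<open>polys\<close>, so that equality of operators is
  determined by their action on polynomials.\<close>
typedef (overloaded) 'v poly_op = "{F :: ('v::real_normed_vector) oper. (\<forall>f. f \<notin> polys \<longrightarrow> F f = (\<lambda>x. 0)) \<and> linear_on_polys F}"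
  morphisms act Abs_poly_op
  by (rule exI[of _ "\<lambda>f x. 0"]) (auto simp: linear_on_polys_def polys_zero)

definition mk_op :: "('v::real_normed_vector) oper \<Rightarrow> 'v poly_op" where
  "mk_op F = Abs_poly_op (\<lambda>f. if f \<in> polys then F f else (\<lambda>x. 0))"

lemma act_mk_op: "linear_on_polys F \<Longrightarrow> act (mk_op F) = (\<lambda>f. if f \<in> polys then F f else (\<lambda>x. 0))"
  unfolding mk_op_def
  by (rule Abs_poly_op_inverse) (auto simp: linear_on_polys_def polys_add polys_scaleR)

lemma act_mk_op_polys: "linear_on_polys F \<Longrightarrow> f \<in> polys \<Longrightarrow> act (mk_op F) f = F f"
  by (simp add: act_mk_op)

lemma linear_on_polys_act: "linear_on_polys (act a)" using act[of a] by auto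

lemma act_outside: "f \<notin> polys \<Longrightarrow> act a f = (\<lambda>x. 0)" using act[of a] by auto

lemma act_polys[simp]: "act a f \<in> polys"
  by (cases "f \<in> polys") (auto simp: act_outside polys_zero linear_on_polys_act[unfolded linear_on_polys_def])

lemma act_add: "f \<in> polys \<Longrightarrow> g \<in> polys \<Longrightarrow> act a (\<lambda>x. f x + g x) = (\<lambda>x. act a f x + act a g x)"
  using linear_on_polys_act[of a] by (auto simp: linear_on_polys_def)

lemma act_scaleR: "f \<in> polys \<Longrightarrow> act a (\<lambda>x. c *\<^sub>R f x) = (\<lambda>x. c *\<^sub>R act a f x)"
  using linear_on_polys_act[of a] by (auto simp: linear_on_polys_def)

lemma act_zero[simp]: "act a (\<lambda>x. 0) = (\<lambda>x. 0)"
  using act_scaleR[of "\<lambda>x. 0" a 0] polys_zero by simp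

lemma poly_op_eqI: "(\<And>f. f \<in> polys \<Longrightarrow> act a f = act b f) \<Longrightarrow> a = b"
proof -
  assume H: "\<And>f. f \<in> polys \<Longrightarrow> act a f = act b f"
  have "act a = act b"
  proof
    fix f show "act a f = act b f" by (cases "f \<in> polys") (auto simp: H act_outside)
  qed
  then show "a = b" by (simp add: act_inject)
qed

lemma linear_on_polys_zero: "linear_on_polys (\<lambda>f x. 0)"
  by (auto simp: linear_on_polys_def polys_zero)
lemma linear_on_polys_id: "linear_on_polys (\<lambda>f. f)" by (auto simp: linear_on_polys_def)
lemma linear_on_polys_plus: "linear_on_polys (\<lambda>f x. act a f x + act b f x)"
  by (auto simp: linear_on_polys_def polys_add act_add act_scaleR algebra_simps)
lemma linear_on_polys_uminus: "linear_on_polys (\<lambda>f x. - act a f x)"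
  by (auto simp: linear_on_polys_def polys_uminus act_add act_scaleR algebra_simps)
lemma linear_on_polys_minus: "linear_on_polys (\<lambda>f x. act a f x - act b f x)"
  by (auto simp: linear_on_polys_def polys_diff act_add act_scaleR algebra_simps)
lemma linear_on_polys_comp: "linear_on_polys (\<lambda>f. act a (act b f))"
  by (auto simp: linear_on_polys_def act_add act_scaleR)

instantiation poly_op :: (real_normed_vector) "{zero, one, plus, minus, uminus, times}"
begin
definition "0 = mk_op (\<lambda>f x. 0)"
definition "1 = mk_op (\<lambda>f. f)"
definition "a + b = mk_op (\<lambda>f x. act a f x + act b f x)"
definition "a - b = mk_op (\<lambda>f x. act a f x - act b f x)"
definition "- a = mk_op (\<lambda>f x. - act a f x)"
definition "a * b = mk_op (\<lambda>f. act a (act b f))"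
instance ..
end

lemma act_0[simp]: "act (0::'v::real_normed_vector poly_op) f = (\<lambda>x. 0)"
  by (simp add: zero_poly_op_def act_mk_op linear_on_polys_zero)
lemma act_1: "act (1::'v::real_normed_vector poly_op) f = (if f \<in> polys then f else (\<lambda>x. 0))"
  by (simp add: one_poly_op_def act_mk_op linear_on_polys_id)
lemma act_1_polys[simp]: "f \<in> polys \<Longrightarrow> act (1::'v::real_normed_vector poly_op) f = f"
  by (simp add: act_1)
lemma act_plus[simp]: "act (a + b) f = (\<lambda>x. act a f x + act b f x)"
  by (cases "f \<in> polys") (simp_all add: plus_poly_op_def act_mk_op linear_on_polys_plus act_outside)
lemma act_minus[simp]: "act (a - b) f = (\<lambda>x. act a f x - act b f x)"
  by (cases "f \<in> polys") (simp_all add: minus_poly_op_def act_mk_op linear_on_polys_minus act_outside)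
lemma act_uminus[simp]: "act (- a) f = (\<lambda>x. - act a f x)"
  by (cases "f \<in> polys") (simp_all add: uminus_poly_op_def act_mk_op linear_on_polys_uminus act_outside)
lemma act_times[simp]: "act (a * b) f = act a (act b f)"
  by (cases "f \<in> polys") (simp_all add: times_poly_op_def act_mk_op linear_on_polys_comp act_outside)

instance poly_op :: (real_normed_vector) ring
proof
  fix a b c :: "'v::real_normed_vector poly_op"
  show "a + b + c = a + (b + c)" by (rule poly_op_eqI) (simp add: add.assoc)
  show "a + b = b + a" by (rule poly_op_eqI) (simp add: add.commute)
  show "0 + a = a" by (rule poly_op_eqI) simp
  show "- a + a = 0" by (rule poly_op_eqI) simp
  show "a - b = a + - b" by (rule poly_op_eqI) simp
  show "a * b * c = a * (b * c)" by (rule poly_op_eqI) simp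
  show "(a + b) * c = a * c + b * c" by (rule poly_op_eqI) simp
  show "a * (b + c) = a * b + a * c" by (rule poly_op_eqI) (simp add: act_add)
qed

instance poly_op :: (real_normed_vector) monoid_mult
proof
  fix a :: "'v::real_normed_vector poly_op"
  show "1 * a = a" by (rule poly_op_eqI) simp
  show "a * 1 = a" by (rule poly_op_eqI) simp
qed

definition coord_op :: "nat \<Rightarrow> 'v::real_normed_vector poly_op" where "coord_op i =
    mk_op (\<lambda>f x. x i *\<^sub>R f x)"
definition refl_op :: "nat set \<Rightarrow> 'v::real_normed_vector poly_op" where "refl_op A =
    mk_op (reflset A)"
definition clifford_op :: "(nat \<Rightarrow> 'v \<Rightarrow> 'v) \<Rightarrow> nat \<Rightarrow> 'v::real_normed_vector poly_op" where "clifford_op e i = mk_op (\<lambda>f x. e i (f x))"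
definition pd_op :: "nat \<Rightarrow> 'v::real_normed_vector poly_op" where "pd_op i = mk_op (pd i)"
definition divdiff_op :: "nat \<Rightarrow> 'v::real_normed_vector poly_op" where "divdiff_op i =
    mk_op (divdiff i)"
definition scalar_op :: "real \<Rightarrow> 'v::real_normed_vector poly_op" where "scalar_op c =
    mk_op (\<lambda>f x. c *\<^sub>R f x)"

lemma linear_on_polys_mult_coord: "1 \<le> i \<Longrightarrow> linear_on_polys (\<lambda>f x. x i *\<^sub>R f x)"
  by (auto simp: linear_on_polys_def polys_mult_coord scaleR_right_distrib)
lemma reflset_add: "reflset A (\<lambda>x. f x + g x) = (\<lambda>x. reflset A f x + reflset A g x)"
  by (simp add: reflset_def)
lemma reflset_scale: "reflset A (\<lambda>x. c *\<^sub>R f x) = (\<lambda>x. c *\<^sub>R reflset A f x)"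
  by (simp add: reflset_def)
lemma linear_on_polys_reflset: "linear_on_polys (reflset A)"
  by (simp add: linear_on_polys_def polys_reflset reflset_add reflset_scale)
lemma linear_on_polys_linear: "linear L \<Longrightarrow> linear_on_polys (\<lambda>f x. L (f x))"
  by (auto simp: linear_on_polys_def polys_linear linear_add linear_scale)
lemma linear_on_polys_pd: "linear_on_polys (pd i)"
  by (auto simp: linear_on_polys_def pd_polys pd_add pd_scaleR)
lemma linear_on_polys_divdiff: "linear_on_polys (divdiff i)"
  by (auto simp: linear_on_polys_def divdiff_polys divdiff_add divdiff_scaleR)
lemma linear_on_polys_scaleR: "linear_on_polys (\<lambda>f x. c *\<^sub>R f x)"
  by (auto simp: linear_on_polys_def polys_scaleR scaleR_right_distrib)

lemma act_coord_op: "1 \<le> i \<Longrightarrow> f \<in> polys \<Longrightarrow> act (coord_op i) f = (\<lambda>x. x i *\<^sub>R f x)"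
  by (simp add: coord_op_def act_mk_op_polys linear_on_polys_mult_coord)
lemma act_refl_op: "f \<in> polys \<Longrightarrow> act (refl_op A) f = reflset A f"
  by (simp add: refl_op_def act_mk_op_polys linear_on_polys_reflset)
lemma act_clifford_op: "linear (e i) \<Longrightarrow> f \<in> polys \<Longrightarrow> act (clifford_op e i) f = (\<lambda>x. e i (f x))"
  by (simp add: clifford_op_def act_mk_op_polys linear_on_polys_linear)
lemma act_pd_op: "f \<in> polys \<Longrightarrow> act (pd_op i) f = pd i f"
  by (simp add: pd_op_def act_mk_op_polys linear_on_polys_pd)
lemma act_divdiff_op: "f \<in> polys \<Longrightarrow> act (divdiff_op i) f = divdiff i f"
  by (simp add: divdiff_op_def act_mk_op_polys linear_on_polys_divdiff)
lemma act_scalar_op: "f \<in> polys \<Longrightarrow> act (scalar_op c) f = (\<lambda>x. c *\<^sub>R f x)"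
  by (simp add: scalar_op_def act_mk_op_polys linear_on_polys_scaleR)

lemma scalar_op_commute: "scalar_op c * a = a * scalar_op c"
  by (rule poly_op_eqI) (simp add: act_scalar_op act_scaleR)
lemma scalar_op_mult: "scalar_op c * scalar_op d = scalar_op (c * d)"
  by (rule poly_op_eqI) (simp add: act_scalar_op polys_scaleR)
lemma scalar_op_add: "scalar_op c + scalar_op d = scalar_op (c + d)"
  by (rule poly_op_eqI) (simp add: act_scalar_op scaleR_left_distrib)
lemma scalar_op_1: "scalar_op 1 = 1"
  by (rule poly_op_eqI) (simp add: act_scalar_op)
lemma scalar_op_uminus: "scalar_op (- c) = - scalar_op c"
  by (rule poly_op_eqI) (simp add: act_scalar_op)
lemma scalar_op_0: "scalar_op 0 = 0"
  by (rule poly_op_eqI) (simp add: act_scalar_op)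

lemma coord_op_commute: "1 \<le> i \<Longrightarrow> 1 \<le> j \<Longrightarrow> coord_op i * coord_op j = coord_op j * coord_op i"
  by (rule poly_op_eqI) (simp add: act_coord_op polys_mult_coord mult.commute)

lemma sign_flip_sign_flip: "sign_flip A (sign_flip B x) = sign_flip ((A - B) \<union> (B - A)) x"
  by (auto simp: sign_flip_def)

lemma refl_op_mult: "refl_op A * refl_op B = refl_op ((A - B) \<union> (B - A))"
  by (rule poly_op_eqI) (simp add: act_refl_op polys_reflset, simp add: reflset_eq_sign_flip sign_flip_sign_flip Un_commute)

lemma refl_op_empty: "refl_op {} = 1"
  by (rule poly_op_eqI) (simp add: act_refl_op reflset_def)

lemma refl_op_coord_op: "1 \<le> i \<Longrightarrow>
    refl_op A * coord_op i = (if i \<in> A then - (coord_op i * refl_op A) else coord_op i * refl_op A)"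
  by (rule poly_op_eqI) (simp add: act_refl_op act_coord_op polys_reflset polys_mult_coord, auto simp: reflset_eq_sign_flip sign_flip_def)

lemma refl_op_clifford_op: "linear (e i) \<Longrightarrow>
    refl_op A * clifford_op e i = clifford_op e i * refl_op A"
  by (rule poly_op_eqI) (simp add: act_refl_op act_clifford_op polys_reflset polys_linear, simp add: reflset_eq_sign_flip)

lemma pd_op_refl_op: "pd_op i * refl_op A =
    (if i \<in> A then - (refl_op A * pd_op i) else refl_op A * pd_op i)"
  by (rule poly_op_eqI) (auto simp: act_refl_op act_pd_op polys_reflset pd_polys pd_reflset)

lemma divdiff_op_refl_op: "divdiff_op i * refl_op A =
    (if i \<in> A then - (refl_op A * divdiff_op i) else refl_op A * divdiff_op i)"
  by (rule poly_op_eqI) (auto simp: act_refl_op act_divdiff_op polys_reflset divdiff_polys divdiff_reflset)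

lemma clifford_op_anticommutator:
  assumes "clifford_module n e" "i \<in> {1..n}" "j \<in> {1..n}"
  shows "clifford_op e i * clifford_op e j + clifford_op e j * clifford_op e i =
      scalar_op (if i = j then -2 else 0)"
proof -
  have l: "linear (e i)" "linear (e j)" using assms by (auto simp: clifford_module_def)
  have c: "\<And>v. e i (e j v) + e j (e i v) = (if i = j then -2 else 0) *\<^sub>R v"
    using assms by (auto simp: clifford_module_def)
  show ?thesis
    by (rule poly_op_eqI) (simp add: act_clifford_op act_scalar_op l polys_linear c)
qed

lemma clifford_op_coord_op: "linear (e i) \<Longrightarrow> 1 \<le> j \<Longrightarrow>
    clifford_op e i * coord_op j = coord_op j * clifford_op e i"
  by (rule poly_op_eqI) (simp add: act_clifford_op act_coord_op polys_linear polys_mult_coord linear_scale)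

lemma clifford_op_pd_op: "linear (e i) \<Longrightarrow> clifford_op e i * pd_op j = pd_op j * clifford_op e i"
  by (rule poly_op_eqI) (simp add: act_clifford_op act_pd_op polys_linear pd_polys pd_linear)

lemma clifford_op_divdiff_op: "linear (e i) \<Longrightarrow>
    clifford_op e i * divdiff_op j = divdiff_op j * clifford_op e i"
  by (rule poly_op_eqI) (simp add: act_clifford_op act_divdiff_op polys_linear divdiff_polys divdiff_linear)

lemma pd_op_coord_op: "1 \<le> j \<Longrightarrow>
    pd_op i * coord_op j = coord_op j * pd_op i + (if i = j then 1 else 0)"
  by (rule poly_op_eqI) (auto simp: act_pd_op act_coord_op polys_mult_coord pd_polys pd_mult_coord)

lemma divdiff_op_coord_op_other: "1 \<le> j \<Longrightarrow> i \<noteq> j \<Longrightarrow>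
    divdiff_op i * coord_op j = coord_op j * divdiff_op i"
  by (rule poly_op_eqI) (simp add: act_divdiff_op act_coord_op polys_mult_coord divdiff_polys divdiff_mult_coord_other)

lemma divdiff_op_coord_op: "1 \<le> i \<Longrightarrow> divdiff_op i * coord_op i = 1 + refl_op {i}"
  by (rule poly_op_eqI) (simp add: act_divdiff_op act_coord_op act_refl_op polys_mult_coord divdiff_mult_coord)

lemma coord_op_divdiff_op: "1 \<le> i \<Longrightarrow> coord_op i * divdiff_op i = 1 - refl_op {i}"
  by (rule poly_op_eqI) (simp add: act_divdiff_op act_coord_op act_refl_op divdiff_polys mult_coord_divdiff)

lemma pd_op_commute: "pd_op i * pd_op j = pd_op j * pd_op i"
  by (rule poly_op_eqI) (simp add: act_pd_op pd_polys pd_commute)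

lemma divdiff_op_pd_op: "1 \<le> i \<Longrightarrow> i \<noteq> j \<Longrightarrow> divdiff_op i * pd_op j = pd_op j * divdiff_op i"
  by (rule poly_op_eqI) (simp add: act_pd_op act_divdiff_op pd_polys divdiff_polys divdiff_pd_commute)

lemma divdiff_op_commute: "1 \<le> j \<Longrightarrow> i \<noteq> j \<Longrightarrow>
    divdiff_op i * divdiff_op j = divdiff_op j * divdiff_op i"
  by (rule poly_op_eqI) (simp add: act_divdiff_op divdiff_polys, rule divdiff_commute, simp_all)

definition dunkl_op :: "(nat \<Rightarrow> real) \<Rightarrow> nat \<Rightarrow> 'v::real_normed_vector poly_op" where
  "dunkl_op mu i = pd_op i + scalar_op (mu i) * divdiff_op i"

lemma mult_scalar_op_middle: "a * (scalar_op c * b) = scalar_op c * (a * b)"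
  using scalar_op_commute[of c a] by (simp add: mult.assoc[symmetric])

lemma scalar_op_mult_commute: "x * y = y * x \<Longrightarrow> (scalar_op c * x) * y = y * (scalar_op c * x)"
  by (simp only: mult.assoc mult_scalar_op_middle[of y c x])

lemma scalar_op_mult_commute_both:
  assumes "x * y = y * x"
  shows "(scalar_op c * x) * (scalar_op d * y) = (scalar_op d * y) * (scalar_op c * x)"
  using assms by (metis mult.assoc mult_scalar_op_middle scalar_op_mult_commute)

lemma dunkl_op_coord_op_other:
  assumes "1 \<le> i" "1 \<le> j" "i \<noteq> j"
  shows "dunkl_op mu i * coord_op j =
      coord_op j * (dunkl_op mu i :: 'v::real_normed_vector poly_op)"
proof -
  have "dunkl_op mu i * coord_op j =
      (pd_op i :: 'v poly_op) * coord_op j + scalar_op (mu i) * (divdiff_op i * coord_op j)"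
    by (simp add: dunkl_op_def distrib_right mult.assoc)
  also have "\<dots> = coord_op j * pd_op i + scalar_op (mu i) * (coord_op j * divdiff_op i)"
    using assms by (simp add: pd_op_coord_op divdiff_op_coord_op_other)
  also have "\<dots> = coord_op j * pd_op i + coord_op j * (scalar_op (mu i) * divdiff_op i)"
    by (simp add: mult_scalar_op_middle)
  also have "\<dots> = coord_op j * dunkl_op mu i" by (simp add: dunkl_op_def distrib_left)
  finally show ?thesis .
qed

lemma dunkl_op_coord_op:
  assumes "1 \<le> i"
  shows "dunkl_op mu i * coord_op i =
      coord_op i * dunkl_op mu i + 1 + scalar_op (2 * mu i) * (refl_op {i} :: 'v::real_normed_vector poly_op)"
proof -
  have a: "(dunkl_op mu i :: 'v poly_op) * coord_op i =
      coord_op i * pd_op i + 1 + (scalar_op (mu i) + scalar_op (mu i) * refl_op {i})"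
    using assms
      by (simp add: dunkl_op_def distrib_right mult.assoc pd_op_coord_op divdiff_op_coord_op distrib_left)
  have b0: "(coord_op i :: 'v poly_op) * dunkl_op mu i =
      coord_op i * pd_op i + scalar_op (mu i) * (coord_op i * divdiff_op i)"
    by (simp add: dunkl_op_def distrib_left) (simp add: mult_scalar_op_middle)
  have m: "(coord_op i :: 'v poly_op) * divdiff_op i = 1 - refl_op {i}"
    by (rule coord_op_divdiff_op[OF assms])
  have m2: "scalar_op (mu i) * ((coord_op i :: 'v poly_op) * divdiff_op i) =
      scalar_op (mu i) - scalar_op (mu i) * refl_op {i}"
    unfolding m by (simp add: right_diff_distrib)
  have b: "(coord_op i :: 'v poly_op) * dunkl_op mu i =
      coord_op i * pd_op i + (scalar_op (mu i) - scalar_op (mu i) * refl_op {i})"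
    by (simp only: b0 m2)
  have c: "scalar_op (2 * mu i) * (refl_op {i} :: 'v poly_op) =
      scalar_op (mu i) * refl_op {i} + scalar_op (mu i) * refl_op {i}"
    unfolding distrib_right[symmetric] scalar_op_add by simp
  show ?thesis unfolding a b c by (simp add: algebra_simps)
qed

lemma dunkl_op_refl_op: "dunkl_op mu i * refl_op A =
    (if i \<in> A then - (refl_op A * dunkl_op mu i) else refl_op A * (dunkl_op mu i :: 'v::real_normed_vector poly_op))"
proof -
  have "dunkl_op mu i * refl_op A =
      (pd_op i :: 'v poly_op) * refl_op A + scalar_op (mu i) * (divdiff_op i * refl_op A)"
    by (simp add: dunkl_op_def distrib_right mult.assoc)
  also have "\<dots> =
      (if i \<in> A then - (refl_op A * pd_op i + scalar_op (mu i) * (refl_op A * divdiff_op i)) else refl_op A * pd_op i + scalar_op (mu i) * (refl_op A * divdiff_op i))"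
    by (simp add: pd_op_refl_op divdiff_op_refl_op)
  also have "\<dots> = (if i \<in> A then - (refl_op A * dunkl_op mu i) else refl_op A * dunkl_op mu i)"
    by (simp add: dunkl_op_def distrib_left) (simp add: mult_scalar_op_middle)
  finally show ?thesis .
qed

lemma clifford_op_dunkl_op: "linear (e k) \<Longrightarrow>
    clifford_op e k * dunkl_op mu i = dunkl_op mu i * (clifford_op e k :: 'v::real_normed_vector poly_op)"
proof -
  assume l: "linear (e k)"
  have "clifford_op e k * dunkl_op mu i =
      (clifford_op e k :: 'v poly_op) * pd_op i + scalar_op (mu i) * (clifford_op e k * divdiff_op i)"
    by (simp add: dunkl_op_def distrib_left) (simp add: mult_scalar_op_middle)
  also have "\<dots> = pd_op i * clifford_op e k + scalar_op (mu i) * (divdiff_op i * clifford_op e k)"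
    using l by (simp add: clifford_op_pd_op clifford_op_divdiff_op)
  also have "\<dots> = dunkl_op mu i * clifford_op e k"
    by (simp add: dunkl_op_def distrib_right mult.assoc)
  finally show ?thesis .
qed

lemma dunkl_op_commute:
  assumes "1 \<le> i" "1 \<le> j" "i \<noteq> j"
  shows "dunkl_op mu i * dunkl_op mu j =
      dunkl_op mu j * (dunkl_op mu i :: 'v::real_normed_vector poly_op)"
  unfolding dunkl_op_def
proof (rule commute_add_add)
  show "pd_op i * pd_op j = pd_op j * pd_op i" by (rule pd_op_commute)
  show "pd_op i * (scalar_op (mu j) * divdiff_op j) = scalar_op (mu j) * divdiff_op j * pd_op i"
    by (rule sym, rule scalar_op_mult_commute, rule divdiff_op_pd_op) (use assms in auto)
  show "scalar_op (mu i) * divdiff_op i * pd_op j = pd_op j * (scalar_op (mu i) * divdiff_op i)"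
    using scalar_op_mult_commute[of "divdiff_op i" "pd_op j" "mu i"] divdiff_op_pd_op[of i j] assms
      by simp
  show "scalar_op (mu i) * divdiff_op i * (scalar_op (mu j) * divdiff_op j) =
      scalar_op (mu j) * divdiff_op j * (scalar_op (mu i) * divdiff_op i)"
    using scalar_op_mult_commute_both[of "divdiff_op i" "divdiff_op j" "mu i" "mu j"] divdiff_op_commute[of j i] assms
      by simp
qed

section \<open>Dirac and Gamma operators\<close>

definition coord_clifford_op :: "(nat \<Rightarrow> 'v \<Rightarrow> 'v) \<Rightarrow> nat \<Rightarrow> 'v::real_normed_vector poly_op" where
  "coord_clifford_op e i = coord_op i * clifford_op e i"
definition clifford_dunkl_op :: "(nat \<Rightarrow> real) \<Rightarrow> (nat \<Rightarrow> 'v \<Rightarrow> 'v) \<Rightarrow> nat \<Rightarrow> 'v::real_normed_vector poly_op" where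
  "clifford_dunkl_op mu e i = clifford_op e i * dunkl_op mu i"
definition x_op :: "(nat \<Rightarrow> 'v \<Rightarrow> 'v) \<Rightarrow> nat set \<Rightarrow> 'v::real_normed_vector poly_op" where
  "x_op e A = sum (coord_clifford_op e) A"
definition dirac_op :: "(nat \<Rightarrow> real) \<Rightarrow> (nat \<Rightarrow> 'v \<Rightarrow> 'v) \<Rightarrow> nat set \<Rightarrow> 'v::real_normed_vector poly_op" where
  "dirac_op mu e A = sum (clifford_dunkl_op mu e) A"
definition gamma_op :: "(nat \<Rightarrow> real) \<Rightarrow> (nat \<Rightarrow> 'v \<Rightarrow> 'v) \<Rightarrow> nat set \<Rightarrow> 'v::real_normed_vector poly_op" where
  "gamma_op mu e A = gamma_elem (scalar_op (1/2)) (x_op e A) (dirac_op mu e A) (refl_op A)"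

context
  fixes n :: nat and e :: "nat \<Rightarrow> 'v::real_normed_vector \<Rightarrow> 'v"
  assumes cl: "clifford_module n e"
begin

lemma clifford_linear: "i \<in> {1..n} \<Longrightarrow> linear (e i)"
  using cl by (auto simp: clifford_module_def)

lemma clifford_op_square: "i \<in> {1..n} \<Longrightarrow> clifford_op e i * clifford_op e i = -1"
proof -
  assume i: "i \<in> {1..n}"
  have c: "\<And>v. e i (e i v) = - v"
  proof -
    fix v
    have "e i (e i v) + e i (e i v) = (-2) *\<^sub>R v" using cl i by (auto simp: clifford_module_def)
    then have h2: "2 *\<^sub>R e i (e i v) = 2 *\<^sub>R (- v)" by (simp add: scaleR_2[symmetric])
    have "e i (e i v) = (1/2) *\<^sub>R (2 *\<^sub>R e i (e i v))" by simp
    also have "\<dots> = (1/2) *\<^sub>R (2 *\<^sub>R (- v))" by (simp only: h2)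
    also have "\<dots> = - v" by simp
    finally show "e i (e i v) = - v" .
  qed
  show ?thesis
    by (rule poly_op_eqI) (simp add: act_clifford_op clifford_linear[OF i] polys_linear c)
qed

lemma clifford_op_anticommute: "i \<in> {1..n} \<Longrightarrow> j \<in> {1..n} \<Longrightarrow> i \<noteq> j \<Longrightarrow>
    clifford_op e i * clifford_op e j = - (clifford_op e j * clifford_op e i)"
  using clifford_op_anticommutator[OF cl, of i j] by (simp add: scalar_op_0 eq_neg_iff_add_eq_0)

lemma coord_clifford_op_anticommute:
  assumes "i \<in> {1..n}" "j \<in> {1..n}" "i \<noteq> j"
  shows "coord_clifford_op e i * coord_clifford_op e j =
      - (coord_clifford_op e j * coord_clifford_op e i)"
proof -
  have p: "\<And>a b. a \<in> {1..n} \<Longrightarrow> b \<in> {1..n} \<Longrightarrow>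
      coord_clifford_op e a * coord_clifford_op e b = (coord_op a * coord_op b) * (clifford_op e a * clifford_op e b)"
  proof -
    fix a b assume a: "a \<in> {1..n}" and b: "b \<in> {1..n}"
    have "coord_clifford_op e a * coord_clifford_op e b =
        coord_op a * ((clifford_op e a * coord_op b) * clifford_op e b)"
      by (simp add: coord_clifford_op_def mult.assoc)
    also have "\<dots> = coord_op a * ((coord_op b * clifford_op e a) * clifford_op e b)"
      using a b by (simp add: clifford_op_coord_op clifford_linear)
    also have "\<dots> = (coord_op a * coord_op b) * (clifford_op e a * clifford_op e b)"
      by (simp add: mult.assoc)
    finally show "coord_clifford_op e a * coord_clifford_op e b =
        (coord_op a * coord_op b) * (clifford_op e a * clifford_op e b)" .
  qed
  show ?thesis using assms by (simp add: p clifford_op_anticommute[of i j] coord_op_commute[of i j])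
qed

lemma clifford_dunkl_op_coord_clifford_op:
  assumes "i \<in> {1..n}" "j \<in> {1..n}" "i \<noteq> j"
  shows "clifford_dunkl_op mu e j * coord_clifford_op e i =
      - (coord_clifford_op e i * clifford_dunkl_op mu e j)"
proof -
  have "clifford_dunkl_op mu e j * coord_clifford_op e i =
      clifford_op e j * ((dunkl_op mu j * coord_op i) * clifford_op e i)"
    by (simp add: coord_clifford_op_def clifford_dunkl_op_def mult.assoc)
  also have "\<dots> = clifford_op e j * ((coord_op i * dunkl_op mu j) * clifford_op e i)"
    using assms by (simp add: dunkl_op_coord_op_other)
  also have "\<dots> = (clifford_op e j * coord_op i) * (dunkl_op mu j * clifford_op e i)"
    by (simp add: mult.assoc)
  also have "\<dots> = (coord_op i * clifford_op e j) * (clifford_op e i * dunkl_op mu j)"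
    using assms by (simp add: clifford_op_coord_op clifford_linear clifford_op_dunkl_op)
  also have "\<dots> = coord_op i * ((clifford_op e j * clifford_op e i) * dunkl_op mu j)"
    by (simp add: mult.assoc)
  also have "\<dots> = - (coord_op i * ((clifford_op e i * clifford_op e j) * dunkl_op mu j))"
    using assms by (simp add: clifford_op_anticommute[of j i])
  also have "\<dots> = - (coord_clifford_op e i * clifford_dunkl_op mu e j)"
    by (simp add: coord_clifford_op_def clifford_dunkl_op_def mult.assoc)
  finally show ?thesis .
qed

lemma coord_clifford_op_clifford_dunkl_op:
  assumes "i \<in> {1..n}" "j \<in> {1..n}" "i \<noteq> j"
  shows "coord_clifford_op e i * clifford_dunkl_op mu e j =
      - (clifford_dunkl_op mu e j * coord_clifford_op e i)"
  using clifford_dunkl_op_coord_clifford_op[OF assms, of mu] by simp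

lemma clifford_dunkl_op_anticommute:
  assumes "i \<in> {1..n}" "j \<in> {1..n}" "i \<noteq> j"
  shows "clifford_dunkl_op mu e i * clifford_dunkl_op mu e j =
      - (clifford_dunkl_op mu e j * clifford_dunkl_op mu e i)"
proof -
  have p: "\<And>a b. a \<in> {1..n} \<Longrightarrow> b \<in> {1..n} \<Longrightarrow>
      clifford_dunkl_op mu e a * clifford_dunkl_op mu e b = (clifford_op e a * clifford_op e b) * (dunkl_op mu a * dunkl_op mu b)"
  proof -
    fix a b assume a: "a \<in> {1..n}" and b: "b \<in> {1..n}"
    have "clifford_dunkl_op mu e a * clifford_dunkl_op mu e b =
        clifford_op e a * ((dunkl_op mu a * clifford_op e b) * dunkl_op mu b)"
      by (simp add: clifford_dunkl_op_def mult.assoc)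
    also have "\<dots> = clifford_op e a * ((clifford_op e b * dunkl_op mu a) * dunkl_op mu b)"
      using a b by (simp add: clifford_op_dunkl_op clifford_linear)
    also have "\<dots> = (clifford_op e a * clifford_op e b) * (dunkl_op mu a * dunkl_op mu b)"
      by (simp add: mult.assoc)
    finally show "clifford_dunkl_op mu e a * clifford_dunkl_op mu e b =
        (clifford_op e a * clifford_op e b) * (dunkl_op mu a * dunkl_op mu b)" .
  qed
  show ?thesis using assms by (simp add: p clifford_op_anticommute[of i j] dunkl_op_commute[of i j])
qed

lemma refl_op_coord_clifford_op: "j \<in> {1..n} \<Longrightarrow>
    refl_op A * coord_clifford_op e j = (if j \<in> A then - (coord_clifford_op e j * refl_op A) else coord_clifford_op e j * refl_op A)"
proof -
  assume j: "j \<in> {1..n}"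
  have "refl_op A * coord_clifford_op e j = (refl_op A * coord_op j) * clifford_op e j"
    by (simp add: coord_clifford_op_def mult.assoc)
  also have "\<dots> =
      (if j \<in> A then - (coord_op j * (refl_op A * clifford_op e j)) else coord_op j * (refl_op A * clifford_op e j))"
    using j by (simp add: refl_op_coord_op mult.assoc)
  also have "\<dots> =
      (if j \<in> A then - (coord_clifford_op e j * refl_op A) else coord_clifford_op e j * refl_op A)"
    using j by (simp add: refl_op_clifford_op clifford_linear coord_clifford_op_def mult.assoc)
  finally show ?thesis .
qed

lemma refl_op_clifford_dunkl_op: "j \<in> {1..n} \<Longrightarrow>
    refl_op A * clifford_dunkl_op mu e j = (if j \<in> A then - (clifford_dunkl_op mu e j * refl_op A) else clifford_dunkl_op mu e j * refl_op A)"
proof -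
  assume j: "j \<in> {1..n}"
  have t: "refl_op A * dunkl_op mu j =
      (if j \<in> A then - (dunkl_op mu j * refl_op A) else dunkl_op mu j * refl_op A)"
  proof (cases "j \<in> A")
    case True
    then have "dunkl_op mu j * refl_op A = - (refl_op A * dunkl_op mu j)"
      using dunkl_op_refl_op[of mu j A] by simp
    then show ?thesis using True by (metis minus_minus)
  next
    case False
    have "dunkl_op mu j * refl_op A = refl_op A * dunkl_op mu j"
      using dunkl_op_refl_op[of mu j A] False by simp
    from this[symmetric] False show ?thesis by simp
  qed
  have "refl_op A * clifford_dunkl_op mu e j = (refl_op A * clifford_op e j) * dunkl_op mu j"
    by (simp add: clifford_dunkl_op_def mult.assoc)
  also have "\<dots> = clifford_op e j * (refl_op A * dunkl_op mu j)"
    using j by (simp add: refl_op_clifford_op clifford_linear mult.assoc)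
  also have "\<dots> =
      (if j \<in> A then - (clifford_dunkl_op mu e j * refl_op A) else clifford_dunkl_op mu e j * refl_op A)"
    by (cases "j \<in> A") (simp_all add: t clifford_dunkl_op_def mult.assoc)
  finally show ?thesis .
qed

end

lemma act_sum: "act (sum F A) f = (\<lambda>x. \<Sum>i\<in>A. act (F i) f x)"
proof (cases "finite A")
  case True then show ?thesis by (induction A rule: finite_induct) simp_all
next
  case False then show ?thesis by simp
qed

context
  fixes n :: nat and e :: "nat \<Rightarrow> 'v::real_normed_vector \<Rightarrow> 'v"
  assumes cl: "clifford_module n e"
begin

lemma x_op_anticommute: "A \<subseteq> {1..n} \<Longrightarrow> B \<subseteq> {1..n} \<Longrightarrow> A \<inter> B = {} \<Longrightarrow>
    x_op e A * x_op e B = - (x_op e B * x_op e A)"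
  unfolding x_op_def by (rule sum_anticommute) (rule coord_clifford_op_anticommute[OF cl], auto)
lemma x_op_dirac_op_anticommute: "A \<subseteq> {1..n} \<Longrightarrow> B \<subseteq> {1..n} \<Longrightarrow> A \<inter> B = {} \<Longrightarrow>
    x_op e A * dirac_op mu e B = - (dirac_op mu e B * x_op e A)"
  unfolding x_op_def dirac_op_def
    by (rule sum_anticommute) (rule coord_clifford_op_clifford_dunkl_op[OF cl], auto)
lemma dirac_op_x_op_anticommute: "A \<subseteq> {1..n} \<Longrightarrow> B \<subseteq> {1..n} \<Longrightarrow> A \<inter> B = {} \<Longrightarrow>
    dirac_op mu e A * x_op e B = - (x_op e B * dirac_op mu e A)"
  unfolding x_op_def dirac_op_def
    by (rule sum_anticommute) (rule clifford_dunkl_op_coord_clifford_op[OF cl], auto)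
lemma dirac_op_anticommute: "A \<subseteq> {1..n} \<Longrightarrow> B \<subseteq> {1..n} \<Longrightarrow> A \<inter> B = {} \<Longrightarrow>
    dirac_op mu e A * dirac_op mu e B = - (dirac_op mu e B * dirac_op mu e A)"
  unfolding dirac_op_def by (rule sum_anticommute) (rule clifford_dunkl_op_anticommute[OF cl], auto)

lemma refl_op_x_op_disjoint: "A \<subseteq> {1..n} \<Longrightarrow> A \<inter> B = {} \<Longrightarrow> refl_op B * x_op e A = x_op e A * refl_op B"
  unfolding x_op_def by (rule commute_sum) (subst refl_op_coord_clifford_op[OF cl], auto)
lemma refl_op_dirac_op_disjoint: "A \<subseteq> {1..n} \<Longrightarrow> A \<inter> B = {} \<Longrightarrow>
    refl_op B * dirac_op mu e A = dirac_op mu e A * refl_op B"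
  unfolding dirac_op_def by (rule commute_sum) (subst refl_op_clifford_dunkl_op[OF cl], auto)
lemma refl_op_x_op: "A \<subseteq> {1..n} \<Longrightarrow> refl_op A * x_op e A = - (x_op e A * refl_op A)"
  unfolding x_op_def by (rule anticommute_sum) (subst refl_op_coord_clifford_op[OF cl], auto)
lemma refl_op_dirac_op: "A \<subseteq> {1..n} \<Longrightarrow> refl_op A * dirac_op mu e A = - (dirac_op mu e A * refl_op A)"
  unfolding dirac_op_def by (rule anticommute_sum) (subst refl_op_clifford_dunkl_op[OF cl], auto)

lemma gamma_op_singleton:
  assumes k: "k \<in> {1..n}"
  shows "gamma_op mu e {k} = scalar_op (mu k)"
proof -
  let ?E = "clifford_op e k" and ?W = "coord_op k * dunkl_op mu k + 1 + scalar_op (2 * mu k) * refl_op {k}"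
  have l: "linear (e k)" and k1: "1 \<le> k" using k clifford_linear[OF cl] by auto
  have E_E: "?E * ?E = -1" by (rule clifford_op_square[OF cl k])
  have E_W: "?E * ?W = ?W * ?E"
    using l k1
      by (simp add: algebra_simps clifford_op_coord_op clifford_op_coord_op[THEN mult_left_rewrite]
        clifford_op_dunkl_op[symmetric] refl_op_clifford_op[symmetric] mult_scalar_op_middle)
  have "x_op e {k} * dirac_op mu e {k} = coord_op k * (?E * ?E) * dunkl_op mu k"
    using l k1
      by (simp add: x_op_def dirac_op_def coord_clifford_op_def clifford_dunkl_op_def mult.assoc)
  also have "\<dots> = - (coord_op k * dunkl_op mu k)" by (simp add: E_E)
  finally have XD: "x_op e {k} * dirac_op mu e {k} = - (coord_op k * dunkl_op mu k)" .
  have "dirac_op mu e {k} * x_op e {k} = ?E * ((dunkl_op mu k * coord_op k) * ?E)"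
    by (simp add: x_op_def dirac_op_def coord_clifford_op_def clifford_dunkl_op_def mult.assoc)
  also have "\<dots> = ?E * ?W * ?E" using k1 by (simp add: dunkl_op_coord_op mult.assoc)
  also have "\<dots> = ?W * (?E * ?E)" by (simp only: E_W mult.assoc)
  also have "\<dots> = - ?W" by (simp add: E_E)
  finally have DX: "dirac_op mu e {k} * x_op e {k} = - ?W" .
  have "gamma_op mu e {k} = scalar_op (1/2) * scalar_op (2 * mu k) * (refl_op {k} * refl_op {k})"
    by (simp add: gamma_op_def gamma_elem_def XD DX mult.assoc)
  also have "\<dots> = scalar_op (mu k)" by (simp add: scalar_op_mult refl_op_mult refl_op_empty)
  finally show ?thesis .
qed

lemma act_x_op: "A \<subseteq> {1..n} \<Longrightarrow> g \<in> polys \<Longrightarrow> act (x_op e A) g = Xop e A g"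
proof -
  assume A: "A \<subseteq> {1..n}" and g: "g \<in> polys"
  have "\<And>i. i \<in> A \<Longrightarrow> act (coord_clifford_op e i) g = (\<lambda>x. x i *\<^sub>R e i (g x))"
  proof -
    fix i assume "i \<in> A"
    then have "i \<in> {1..n}" using A by auto
    then show "act (coord_clifford_op e i) g = (\<lambda>x. x i *\<^sub>R e i (g x))"
      using g by (simp add: coord_clifford_op_def act_clifford_op act_coord_op clifford_linear[OF cl] polys_linear)
  qed
  then show ?thesis by (simp add: x_op_def act_sum Xop_def)
qed

lemma act_dunkl_op: "g \<in> polys \<Longrightarrow> act (dunkl_op mu i) g = dunkl mu i g"
  by (simp add: dunkl_op_def act_pd_op act_divdiff_op act_scalar_op divdiff_polys dunkl_eq_divdiff)

lemma dunkl_polys: "g \<in> polys \<Longrightarrow> dunkl mu i g \<in> polys"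
  using act_dunkl_op[of g mu i] act_polys by metis

lemma act_dirac_op: "A \<subseteq> {1..n} \<Longrightarrow> g \<in> polys \<Longrightarrow> act (dirac_op mu e A) g = Dirac mu e A g"
proof -
  assume A: "A \<subseteq> {1..n}" and g: "g \<in> polys"
  have "\<And>i. i \<in> A \<Longrightarrow> act (clifford_dunkl_op mu e i) g = (\<lambda>x. e i (dunkl mu i g x))"
  proof -
    fix i assume "i \<in> A"
    then have "i \<in> {1..n}" using A by auto
    then show "act (clifford_dunkl_op mu e i) g = (\<lambda>x. e i (dunkl mu i g x))"
      using g by (simp add: clifford_dunkl_op_def act_clifford_op act_dunkl_op clifford_linear[OF cl] dunkl_polys)
  qed
  then show ?thesis by (simp add: dirac_op_def act_sum Dirac_def)
qed

lemma act_gamma_op: "A \<subseteq> {1..n} \<Longrightarrow> f \<in> polys \<Longrightarrow> act (gamma_op mu e A) f = Gam mu e A f"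
  by (simp add: gamma_op_def gamma_elem_def act_scalar_op act_refl_op polys_reflset polys_diff Gam_def Sop_def act_x_op[symmetric] act_dirac_op[symmetric])

end

lemma half_ring_scalar_op: "half_ring (scalar_op (1/2) :: 'v::real_normed_vector poly_op)"
  by unfold_locales (simp_all add: scalar_op_add scalar_op_1 scalar_op_commute)

lemma x_op_union: "finite A \<Longrightarrow> finite B \<Longrightarrow> A \<inter> B = {} \<Longrightarrow> x_op e (A \<union> B) = x_op e A + x_op e B"
  unfolding x_op_def by (rule sum.union_disjoint)

lemma dirac_op_union:
  "finite A \<Longrightarrow> finite B \<Longrightarrow> A \<inter> B = {} \<Longrightarrow> dirac_op mu e (A \<union> B) = dirac_op mu e A + dirac_op mu e B"
  unfolding dirac_op_def by (rule sum.union_disjoint)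

lemma refl_op_union: "A \<inter> B = {} \<Longrightarrow> refl_op (A \<union> B) = refl_op A * refl_op B"
  by (simp add: refl_op_mult Diff_triv Int_commute)

lemma gamma_op_union:
  assumes "finite A" "finite B" "A \<inter> B = {}"
  shows "gamma_op mu e (A \<union> B) = gamma_elem (scalar_op (1/2))
    (x_op e A + x_op e B) (dirac_op mu e A + dirac_op mu e B) (refl_op A * refl_op B)"
  using assms by (simp add: gamma_op_def x_op_union dirac_op_union refl_op_union)

context
  fixes n :: nat and e :: "nat \<Rightarrow> 'v::real_normed_vector \<Rightarrow> 'v" and mu :: "nat \<Rightarrow> real"
  assumes cl: "clifford_module n e"
begin

lemma dunkl_block_singleton:
  assumes "k \<in> {1..n}"
  shows "dunkl_block (scalar_op (1/2)) (x_op e {k}) (dirac_op mu e {k}) (refl_op {k}) (gamma_op mu e {k})"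
proof (intro dunkl_block.intro half_ring_scalar_op dunkl_block_axioms.intro)
  show "refl_op {k} * refl_op {k} = (1 :: 'v poly_op)" by (simp add: refl_op_mult refl_op_empty)
  show "gamma_op mu e {k} =
      gamma_elem (scalar_op (1/2)) (x_op e {k}) (dirac_op mu e {k}) (refl_op {k})"
    by (rule gamma_op_def)
qed (use assms in \<open>simp_all add: refl_op_x_op[OF cl] refl_op_dirac_op[OF cl]
      gamma_op_singleton[OF cl] scalar_op_commute\<close>)

lemma dunkl_block_pair_disjoint:
  assumes "dunkl_block (scalar_op (1/2)) (x_op e A) (dirac_op mu e A) (refl_op A) (gamma_op mu e A)"
    and "dunkl_block (scalar_op (1/2)) (x_op e B) (dirac_op mu e B) (refl_op B) (gamma_op mu e B)"
    and AB: "A \<subseteq> {1..n}" "B \<subseteq> {1..n}" "A \<inter> B = {}"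
  shows "dunkl_block_pair (scalar_op (1/2)) (x_op e A) (dirac_op mu e A) (refl_op A) (gamma_op mu e A)
    (x_op e B) (dirac_op mu e B) (refl_op B) (gamma_op mu e B)"
proof -
  have BA: "B \<subseteq> {1..n}" "A \<subseteq> {1..n}" "B \<inter> A = {}" using AB by auto
  show ?thesis
    by (intro dunkl_block_pair.intro assms dunkl_block_pair_axioms.intro
        x_op_anticommute[OF cl BA] x_op_dirac_op_anticommute[OF cl BA]
        dirac_op_x_op_anticommute[OF cl BA] dirac_op_anticommute[OF cl BA]
        refl_op_x_op_disjoint[OF cl AB(1,3)] refl_op_dirac_op_disjoint[OF cl AB(1,3)]
        refl_op_x_op_disjoint[OF cl BA(1,3), symmetric] refl_op_dirac_op_disjoint[OF cl BA(1,3), symmetric])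
      (simp add: refl_op_mult Un_commute)
qed

lemma dunkl_block_gamma_op:
  assumes "A \<subseteq> {1..n}"
  shows "dunkl_block (scalar_op (1/2)) (x_op e A) (dirac_op mu e A) (refl_op A) (gamma_op mu e A)"
proof -
  have "finite A" using assms by (rule finite_subset) simp
  then show ?thesis using assms
  proof (induction A rule: finite_induct)
    case empty
    show ?case
      by (intro dunkl_block.intro half_ring_scalar_op dunkl_block_axioms.intro)
        (simp_all add: x_op_def dirac_op_def refl_op_empty gamma_op_def)
  next
    case (insert k A)
    then have A: "A \<subseteq> {1..n}" "{k} \<subseteq> {1..n}" "A \<inter> {k} = {}" by auto
    interpret dunkl_block_pair "scalar_op (1/2)" "x_op e A" "dirac_op mu e A" "refl_op A" "gamma_op mu e A"
      "x_op e {k}" "dirac_op mu e {k}" "refl_op {k}" "gamma_op mu e {k}"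
      using insert dunkl_block_singleton A by (intro dunkl_block_pair_disjoint) auto
    have fin: "finite A" "finite {k}" using insert.hyps(1) by auto
    have U: "insert k A = A \<union> {k}" by auto
    show ?case
      unfolding U x_op_union[OF fin A(3)] dirac_op_union[OF fin A(3)]
        gamma_op_union[OF fin A(3)] refl_op_union[OF A(3)] by (rule block_union)
  qed
qed

lemma dunkl_block_triple_disjoint:
  assumes "A \<subseteq> {1..n}" "B \<subseteq> {1..n}" "C \<subseteq> {1..n}" "A \<inter> B = {}" "A \<inter> C = {}" "B \<inter> C = {}"
  shows "dunkl_block_triple (scalar_op (1/2))
    (x_op e A) (dirac_op mu e A) (refl_op A) (gamma_op mu e A)
    (x_op e B) (dirac_op mu e B) (refl_op B) (gamma_op mu e B)
    (x_op e C) (dirac_op mu e C) (refl_op C) (gamma_op mu e C)"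
  using assms by (intro dunkl_block_triple.intro dunkl_block_pair_disjoint dunkl_block_gamma_op)

end

lemma gamma_op_square_factorization:
  assumes cl: "clifford_module n e"
    and sub: "A \<subseteq> {1..n}" "B \<subseteq> {1..n}" "C \<subseteq> {1..n}"
    and disj: "A \<inter> B = {}" "A \<inter> C = {}" "B \<inter> C = {}"
    and s: "s \<in> {1, -1}"
  shows "((gamma_op mu e (B \<union> C) + scalar_op s * gamma_op mu e (A \<union> C)) * (gamma_op mu e (A \<union> B) + scalar_op (- s / 2))
        - (gamma_op mu e C + scalar_op s * gamma_op mu e (A \<union> B \<union> C)) * (gamma_op mu e A + scalar_op s * gamma_op mu e B))
      * ((gamma_op mu e (B \<union> C) + scalar_op s * gamma_op mu e (A \<union> C)) * (gamma_op mu e (A \<union> B) + scalar_op (- s / 2))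
        - (gamma_op mu e C + scalar_op s * gamma_op mu e (A \<union> B \<union> C)) * (gamma_op mu e A + scalar_op s * gamma_op mu e B))
    = (gamma_op mu e (A \<union> B \<union> C) - gamma_op mu e (A \<union> B) + scalar_op s * gamma_op mu e C + scalar_op (s / 2))
      * (gamma_op mu e (A \<union> B \<union> C) + gamma_op mu e (A \<union> B) + scalar_op s * gamma_op mu e C + scalar_op (- s / 2))
      * (gamma_op mu e A - gamma_op mu e (A \<union> B) + scalar_op s * gamma_op mu e B + scalar_op (s / 2))
      * (gamma_op mu e A + gamma_op mu e (A \<union> B) + scalar_op s * gamma_op mu e B + scalar_op (- s / 2))"
proof -
  interpret dunkl_block_triple "scalar_op (1/2)"
    "x_op e A" "dirac_op mu e A" "refl_op A" "gamma_op mu e A"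
    "x_op e B" "dirac_op mu e B" "refl_op B" "gamma_op mu e B"
    "x_op e C" "dirac_op mu e C" "refl_op C" "gamma_op mu e C"
    by (rule dunkl_block_triple_disjoint[OF cl sub disj])
  have fin: "finite A" "finite B" "finite C"
    using sub by (auto intro: finite_subset)
  have gammas: "gamma_op mu e (A \<union> B) = G12" "gamma_op mu e (A \<union> C) = G13"
    "gamma_op mu e (B \<union> C) = G23" "gamma_op mu e (A \<union> B \<union> C) = G123"
    using fin disj by (simp_all add: gamma_op_union G12_def G13_def G23_def G123_def
        x_op_union dirac_op_union refl_op_union Int_Un_distrib2)
  have S: "scalar_op s = 1 \<or> scalar_op s = -1"
    using s by (auto simp: scalar_op_1 scalar_op_uminus)
  have halves: "scalar_op (s / 2) = scalar_op s * scalar_op (1/2)"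
    "scalar_op (- s / 2) = - (scalar_op s * scalar_op (1/2))"
    by (simp_all add: scalar_op_mult scalar_op_uminus[symmetric])
  show ?thesis
    using square_factorization[OF S] unfolding gammas halves by simp
qed

section \<open>Transfer to the operators of the statement\<close>

definition represents :: "'v::real_normed_vector oper \<Rightarrow> 'v poly_op \<Rightarrow> bool" where
  "represents P a \<longleftrightarrow> (\<forall>f\<in>polys. P f = act a f)"

lemma represents_op_plus: "represents P a \<Longrightarrow> represents Q b \<Longrightarrow> represents (op_plus P Q) (a + b)"
  by (simp add: represents_def op_plus_def)

lemma represents_op_minus: "represents P a \<Longrightarrow> represents Q b \<Longrightarrow> represents (op_minus P Q) (a - b)"
  by (simp add: represents_def op_minus_def)

lemma represents_op_smul: "represents P a \<Longrightarrow> represents (op_smul c P) (scalar_op c * a)"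
  by (simp add: represents_def op_smul_def act_scalar_op)

lemma represents_op_const: "represents (op_const c) (scalar_op c)"
  by (simp add: represents_def op_const_def act_scalar_op)

lemma represents_comp: "represents P a \<Longrightarrow> represents Q b \<Longrightarrow> represents (P \<circ> Q) (a * b)"
  by (simp add: represents_def)

lemma represents_Gam: "clifford_module n e \<Longrightarrow> A \<subseteq> {1..n} \<Longrightarrow> represents (Gam mu e A) (gamma_op mu e A)"
  by (simp add: represents_def act_gamma_op)

text \<open>Both sides are stated as composites so that the lemma unifies first-order with goals
  of the form \<open>(P \<circ> Q) f = \<dots>\<close>.\<close>
lemma represents_comp_eqI:
  assumes "represents (P1 \<circ> P2) a" "represents (Q1 \<circ> Q2) b" "a = b" "f \<in> polys"
  shows "(P1 \<circ> P2) f = (Q1 \<circ> Q2) f"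
  using assms by (simp add: represents_def)

theorem proposition10:
  fixes n l :: nat and mu :: "nat \<Rightarrow> real" and e :: "nat \<Rightarrow> 'v::real_normed_vector \<Rightarrow> 'v"
    and s :: real and f :: "'v fn"
  assumes "n \<ge> 3" and "l \<in> {1..n-2}"
    and "\<forall>i\<in>{1..n}. mu i > 0"
    and "clifford_module n e"
    and "s \<in> {1, -1}"
    and "f \<in> polyV n"
  shows "(Kop mu e s l \<circ> Kop mu e s l) f =
     (op_plus (op_plus (op_minus (Gam mu e {1..l+2}) (Gam mu e {1..l+1})) (op_smul s (Gam mu e {l+2}))) (op_const (s / 2))
      \<circ> op_plus (op_plus (op_plus (Gam mu e {1..l+2}) (Gam mu e {1..l+1})) (op_smul s (Gam mu e {l+2}))) (op_const (- s / 2))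
      \<circ> op_plus (op_plus (op_minus (Gam mu e {1..l}) (Gam mu e {1..l+1})) (op_smul s (Gam mu e {l+1}))) (op_const (s / 2))
      \<circ> op_plus (op_plus (op_plus (Gam mu e {1..l}) (Gam mu e {1..l+1})) (op_smul s (Gam mu e {l+1}))) (op_const (- s / 2))) f"
proof -
  have l: "1 \<le> l" "l + 2 \<le> n" using assms(1,2) by auto
  have sub: "{1..l} \<subseteq> {1..n}" "{l+1} \<subseteq> {1..n}" "{l+2} \<subseteq> {1..n}" "{l+1, l+2} \<subseteq> {1..n}"
    "{1..l+2} - {l+1} \<subseteq> {1..n}" "{1..l+1} \<subseteq> {1..n}" "{1..l+2} \<subseteq> {1..n}"
    using l by auto
  have disj: "{1..l} \<inter> {l+1} = {}" "{1..l} \<inter> {l+2} = {}" "{l+1} \<inter> {l+2} = {}" by auto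
  have unions: "{l+1} \<union> {l+2} = {l+1, l+2}" "{1..l} \<union> {l+2} = {1..l+2} - {l+1}"
    "{1..l} \<union> {l+1} = {1..l+1}" "{1..l+1} \<union> {l+2} = {1..l+2}" by auto
  note square = gamma_op_square_factorization[where mu = mu, OF assms(4) sub(1-3) disj assms(5), unfolded unions]
  show ?thesis unfolding Kop_def
    by (rule represents_comp_eqI[OF _ _ square polysI[OF assms(6)]];
        intro represents_op_minus represents_op_plus represents_op_smul represents_op_const
          represents_comp represents_Gam[OF assms(4)] sub)
qed

end
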